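(* Assume (I), (M), and that $(t,\mathbf q)\mapsto f(t,i,\mathbf q)$ is continuous for every $i\in S$. Let $\delta_n\downarrow0$, and for each $n$ let $u^n\in\mathcal A^n$ be an equilibrium of the discretized problem $V^n$, with $Q^n:=Q^{u^n,n}$. If there is $Q^*\in\mathcal Q$ such that (along a subsequence) $Q^n\to Q^*$, then $f(0,i,Q^*_i)+Q^*_i\cdot F(Q^* )\ge f(0,i,Q_i)+Q_i\cdot F(Q^* )$ for all $(i,Q)\in S\times\mathcal Q$; that is, $Q^*$ is a weak equilibrium.
   Context: Continuous-time setting: $S=\{1,\dots,N\}$; $E_i=\{q\in\mathbb R^N:q_j\ge0\ (j\ne i),\ q_i=-\sum_{j\ne i}q_j\}$; $D_i\subseteq E_i$ given; $\mathcal Q=\{Q\in\mathbb R^{N\times N}:Q_i\in D_i\ \forall i\}$ ($Q_i$ the $i$-th row); $X$ a continuous-time Markov chain with generator $Q$, $\mathbb E_{i,Q}$ expectation given $X_0=i$; payoff $f(t,i,\mathbf q)$ for $t\ge0,i\in S,\mathbf q\in D_i$; $F(i,Q)=\mathbb E_{i,Q}[\int_0^\infty f(t,X_t,Q_{X_t})dt]$, $F(Q)=(F(1,Q),\dots,F(N,Q))$. $Q\otimes_\varepsilon Q'$: generator $Q$ on $[0,\varepsilon]$, then $Q'$ on $(\varepsilon,\infty)$, with expected payoff $F(i,Q\otimes_\varepsilon Q')$; $Q^*$ is a weak equilibrium if $\liminf_{\varepsilon\downarrow0}\varepsilon^{-1}(F(i,Q^* )-F(i,Q\otimes_\varepsilon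 Q^* ))\ge0$ for all $Q\in\mathcal Q,i\in S$. (I): $\int_0^\infty\sup_{i,\mathbf q\in D_i,\|\mathbf q\|\le c}|f(t,i,\mathbf q)|dt<\infty$ for all $c>0$. (M): there is $T>0$ such that $t\mapsto|f(t,i,\mathbf q)|$ is nonincreasing on $[T,\infty)$ for all $i,\mathbf q$. Discretization: $\mathfrak P=\{\alpha\in\mathbb R_+^N:\sum_k\alpha_k=1\}$; $\tilde\alpha^{i,n}=(\alpha-e_i)/\delta_n$; $\kappa^n(k,i,\alpha)=f(k\delta_n,i,\tilde\alpha^{i,n})\,\delta_n$. For a transition matrix $u$, $Q^{u,n}=(u-I)/\delta_n$; $\mathcal A^n=\{u\text{ transition matrix}:Q^{u,n}\in\mathcal Q\}$. For a discrete-time Markov chain $Y$ with transition matrix $u$, $V^n(i,u)=\mathbb E_{i,u}[\sum_{k=0}^\infty\kappa^n(k,Y_k,u_{Y_k})]$; $u\otimes_1u'$ uses $u$ at time 0 and $u'$ afterwards; $u^n\in\mathcal A^n$ is an equilibrium of $V^n$ if $V^n(i,u^n)\ge V^n(i,u\otimes_1u^n)$ for all $i\in S,u\in\mathcal A^n$. *)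

theory Defs
  imports "HOL-Analysis.Analysis"
begin

text \<open>States S = {1..N} are modelled by a finite type 'n; a generator / transition
matrix is a real matrix indexed by 'n, i.e. of type real^'n^'n, row i being Q $ i.\<close>

definition Eset :: "'n::finite \<Rightarrow> (real^'n) set" where
  "Eset i = {q. (\<forall>j. j \<noteq> i \<longrightarrow> q $ j \<ge> 0) \<and> q $ i = - (\<Sum>j\<in>UNIV - {i}. q $ j)}"

definition admissible :: "('n::finite \<Rightarrow> (real^'n) set) \<Rightarrow> (real^'n^'n) set" where
  "admissible D = {Q. \<forall>i. Q $ i \<in> D i}"

fun matpow :: "real^'n::finite^'n \<Rightarrow> nat \<Rightarrow> real^'n^'n" where
  "matpow A 0 = mat 1"
| "matpow A (Suc k) = matpow A k ** A"

text \<open>Transition matrix of the continuous-time chain with generator Q: P(t) = exp(tQ).\<close>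
definition mexp :: "real \<Rightarrow> real^'n::finite^'n \<Rightarrow> real^'n^'n" where
  "mexp t Q = (\<chi> i j. (\<Sum>k. t ^ k / fact k * matpow Q k $ i $ j))"

text \<open>F(i,Q) = E_{i,Q}[int_0^oo f(t,X_t,Q_{X_t}) dt].\<close>
definition Fval :: "(real \<Rightarrow> 'n::finite \<Rightarrow> real^'n \<Rightarrow> real) \<Rightarrow> real^'n^'n \<Rightarrow> 'n \<Rightarrow> real" where
  "Fval f Q i = (LBINT t:{0..}. (\<Sum>j\<in>UNIV. mexp t Q $ i $ j * f t j (Q $ j)))"

text \<open>F(i, Q \<otimes>_eps Q'): generator Q on [0,eps], then Q' on (eps,oo).\<close>
definition Fcat :: "(real \<Rightarrow> 'n::finite \<Rightarrow> real^'n \<Rightarrow> real) \<Rightarrow> real^'n^'n \<Rightarrow> real \<Rightarrow> real^'n^'n \<Rightarrow> 'n \<Rightarrow> real" where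
  "Fcat f Q eps Q' i = (LBINT t:{0..}.
     (if t \<le> eps then (\<Sum>j\<in>UNIV. mexp t Q $ i $ j * f t j (Q $ j))
      else (\<Sum>j\<in>UNIV. \<Sum>l\<in>UNIV. mexp eps Q $ i $ j * mexp (t - eps) Q' $ j $ l * f t l (Q' $ l))))"

definition weak_equilibrium :: "(real \<Rightarrow> 'n::finite \<Rightarrow> real^'n \<Rightarrow> real) \<Rightarrow> ('n \<Rightarrow> (real^'n) set) \<Rightarrow> real^'n^'n \<Rightarrow> bool" where
  "weak_equilibrium f D Qs \<longleftrightarrow> Qs \<in> admissible D \<and>
     (\<forall>Q\<in>admissible D. \<forall>i.
        Liminf (at_right 0) (\<lambda>eps. ereal ((Fval f Qs i - Fcat f Q eps Qs i) / eps)) \<ge> 0)"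

definition transition_matrix :: "real^'n::finite^'n \<Rightarrow> bool" where
  "transition_matrix u \<longleftrightarrow> (\<forall>i j. u $ i $ j \<ge> 0) \<and> (\<forall>i. (\<Sum>j\<in>UNIV. u $ i $ j) = 1)"

definition genOf :: "real \<Rightarrow> real^'n::finite^'n \<Rightarrow> real^'n^'n" where
  "genOf d u = (1 / d) *\<^sub>R (u - mat 1)"

definition Aset :: "('n::finite \<Rightarrow> (real^'n) set) \<Rightarrow> real \<Rightarrow> (real^'n^'n) set" where
  "Aset D d = {u. transition_matrix u \<and> genOf d u \<in> admissible D}"

definition kappa :: "(real \<Rightarrow> 'n::finite \<Rightarrow> real^'n \<Rightarrow> real) \<Rightarrow> real \<Rightarrow> nat \<Rightarrow> 'n \<Rightarrow> real^'n \<Rightarrow> real" where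
  "kappa f d k i \<alpha> = f (real k * d) i ((1 / d) *\<^sub>R (\<alpha> - axis i 1)) * d"

text \<open>V^n(i,u) = E_{i,u}[sum_k kappa^n(k,Y_k,u_{Y_k})].\<close>
definition Vdisc :: "(real \<Rightarrow> 'n::finite \<Rightarrow> real^'n \<Rightarrow> real) \<Rightarrow> real \<Rightarrow> real^'n^'n \<Rightarrow> 'n \<Rightarrow> real" where
  "Vdisc f d u i = (\<Sum>k. \<Sum>j\<in>UNIV. matpow u k $ i $ j * kappa f d k j (u $ j))"

text \<open>V^n(i, u \<otimes>_1 u'): u at time 0, u' afterwards.\<close>
definition Vcat :: "(real \<Rightarrow> 'n::finite \<Rightarrow> real^'n \<Rightarrow> real) \<Rightarrow> real \<Rightarrow> real^'n^'n \<Rightarrow> real^'n^'n \<Rightarrow> 'n \<Rightarrow> real" where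
  "Vcat f d u u' i = kappa f d 0 i (u $ i) +
     (\<Sum>k. \<Sum>j\<in>UNIV. \<Sum>l\<in>UNIV. u $ i $ j * matpow u' k $ j $ l * kappa f d (Suc k) l (u' $ l))"

definition disc_equilibrium :: "(real \<Rightarrow> 'n::finite \<Rightarrow> real^'n \<Rightarrow> real) \<Rightarrow> ('n \<Rightarrow> (real^'n) set) \<Rightarrow> real \<Rightarrow> real^'n^'n \<Rightarrow> bool" where
  "disc_equilibrium f D d un \<longleftrightarrow> un \<in> Aset D d \<and>
     (\<forall>i. \<forall>u\<in>Aset D d. Vdisc f d un i \<ge> Vcat f d u un i)"

end

theory Submission
  imports Defs
begin

text \<open>Testing the discrete equilibrium \<open>u\<^sup>n\<close> against the one-step deviation \<open>I + \<delta>\<^sub>n Q\<close> and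
  dividing by \<open>\<delta>\<^sub>n\<close> gives \<open>f(0, i, Q\<^sup>n\<^sub>i) + Q\<^sup>n\<^sub>i \<cdot> W\<^sup>n \<ge> f(0, i, Q\<^sub>i) + Q\<^sub>i \<cdot> W\<^sup>n\<close>, where \<open>W\<^sup>n\<^sub>j\<close> is
  the discrete value collected from time \<open>1\<close> on.  \<open>W\<^sup>n\<^sub>j\<close> is the integral of a step function
  which converges pointwise to the payoff rate of the continuous-time chain, because
  \<open>(I + \<delta>\<^sub>n Q\<^sup>n)\<^bsup>k\<^esup> \<rightarrow> exp (s Q\<^sup>*)\<close> when \<open>k \<delta>\<^sub>n \<rightarrow> s\<close>; (I) and (M) provide an integrable dominating
  function, so \<open>W\<^sup>n \<rightarrow> F(Q\<^sup>*)\<close> and the inequality passes to the limit.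

  For the weak equilibrium, splitting both values at time \<open>\<epsilon>\<close> writes
  \<open>(F(i, Q\<^sup>*) - F(i, Q \<otimes>\<^sub>\<epsilon> Q\<^sup>*)) / \<epsilon>\<close> as the averages over \<open>[0, \<epsilon>]\<close> of the two payoff rates
  plus \<open>((exp (\<epsilon> Q\<^sup>*) - exp (\<epsilon> Q)) / \<epsilon>) \<cdot> F\<^sub>\<epsilon>(Q\<^sup>*)\<close>, with \<open>F\<^sub>\<epsilon>\<close> the value of the payoff shifted by
  \<open>\<epsilon>\<close>.  This tends to the difference of the two sides of the limit inequality, which is
  nonnegative.\<close>

section \<open>Square matrices as a Banach algebra\<close>

definition row_sum_norm :: "real^'n::finite^'n \<Rightarrow> real" where
  "row_sum_norm A = Max (range (\<lambda>i. \<Sum>j\<in>UNIV. \<bar>A $ i $ j\<bar>))"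

lemma row_sum_le_row_sum_norm: "(\<Sum>j\<in>UNIV. \<bar>A $ i $ j\<bar>) \<le> row_sum_norm A"
  unfolding row_sum_norm_def by (rule Max_ge) auto

lemma row_sum_norm_le: "(\<And>i. (\<Sum>j\<in>UNIV. \<bar>A $ i $ j\<bar>) \<le> c) \<Longrightarrow> row_sum_norm A \<le> c"
  unfolding row_sum_norm_def by (rule Max.boundedI) auto

lemma abs_entry_le_row_sum_norm: "\<bar>A $ i $ j\<bar> \<le> row_sum_norm A"
  by (rule order_trans[OF member_le_sum row_sum_le_row_sum_norm]) auto

lemma row_sum_norm_nonneg: "0 \<le> row_sum_norm A"
  using abs_entry_le_row_sum_norm[of A] by (meson abs_ge_zero order_trans)

lemma row_sum_norm_le_sum_abs: "row_sum_norm A \<le> (\<Sum>i\<in>UNIV. \<Sum>j\<in>UNIV. \<bar>A $ i $ j\<bar>)"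
  by (rule row_sum_norm_le, rule member_le_sum) (auto intro: sum_nonneg)

lemma row_sum_norm_triangle: "row_sum_norm (A + B) \<le> row_sum_norm A + row_sum_norm B"
proof (rule row_sum_norm_le)
  fix i
  have "(\<Sum>j\<in>UNIV. \<bar>(A + B) $ i $ j\<bar>) \<le> (\<Sum>j\<in>UNIV. \<bar>A $ i $ j\<bar>) + (\<Sum>j\<in>UNIV. \<bar>B $ i $ j\<bar>)"
    by (simp add: sum.distrib[symmetric] sum_mono abs_triangle_ineq)
  then show "(\<Sum>j\<in>UNIV. \<bar>(A + B) $ i $ j\<bar>) \<le> row_sum_norm A + row_sum_norm B"
    using row_sum_le_row_sum_norm[of A i] row_sum_le_row_sum_norm[of B i] by linarith
qed

lemma row_sum_norm_scaleR: "row_sum_norm (c *\<^sub>R A) = \<bar>c\<bar> * row_sum_norm A"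
proof -
  have "row_sum_norm (c *\<^sub>R A) = Max ((\<lambda>x. \<bar>c\<bar> * x) ` range (\<lambda>i. \<Sum>j\<in>UNIV. \<bar>A $ i $ j\<bar>))"
    unfolding row_sum_norm_def by (simp add: abs_mult sum_distrib_left image_image)
  also have "\<dots> = \<bar>c\<bar> * row_sum_norm A"
    unfolding row_sum_norm_def by (rule mono_Max_commute[symmetric]) (auto simp: mono_def intro: mult_left_mono)
  finally show ?thesis .
qed

lemma row_sum_norm_eq_0_iff: "row_sum_norm A = 0 \<longleftrightarrow> A = 0"
proof
  assume "row_sum_norm A = 0"
  then show "A = 0"
    using abs_entry_le_row_sum_norm[of A] by (simp add: vec_eq_iff)
qed (simp add: row_sum_norm_def)

lemma row_sum_norm_mult_le: "row_sum_norm (A ** B) \<le> row_sum_norm A * row_sum_norm B"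
proof (rule row_sum_norm_le)
  fix i
  have "(\<Sum>j\<in>UNIV. \<bar>(A ** B) $ i $ j\<bar>) \<le> (\<Sum>j\<in>UNIV. \<Sum>l\<in>UNIV. \<bar>A $ i $ l\<bar> * \<bar>B $ l $ j\<bar>)"
    unfolding matrix_matrix_mult_def
    by (rule sum_mono) (auto intro: order_trans[OF sum_abs] simp: abs_mult)
  also have "\<dots> = (\<Sum>l\<in>UNIV. \<bar>A $ i $ l\<bar> * (\<Sum>j\<in>UNIV. \<bar>B $ l $ j\<bar>))"
    by (subst sum.swap) (simp add: sum_distrib_left)
  also have "\<dots> \<le> (\<Sum>l\<in>UNIV. \<bar>A $ i $ l\<bar> * row_sum_norm B)"
    by (rule sum_mono) (simp add: mult_left_mono row_sum_le_row_sum_norm)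
  also have "\<dots> \<le> row_sum_norm A * row_sum_norm B"
    using row_sum_le_row_sum_norm[of A i] row_sum_norm_nonneg[of B]
    by (simp add: sum_distrib_right[symmetric] mult_right_mono)
  finally show "(\<Sum>j\<in>UNIV. \<bar>(A ** B) $ i $ j\<bar>) \<le> row_sum_norm A * row_sum_norm B" .
qed

lemma row_sum_norm_eq_1: "(\<And>i. (\<Sum>j\<in>UNIV. \<bar>A $ i $ j\<bar>) = 1) \<Longrightarrow> row_sum_norm A = 1"
  by (metis order_antisym order_refl row_sum_le_row_sum_norm row_sum_norm_le)

lemma row_sum_norm_mat_1: "row_sum_norm (mat 1 :: real^'n::finite^'n) = 1"
  by (rule row_sum_norm_eq_1) (simp add: mat_def if_distrib cong: if_cong)

text \<open>\<^typ>\<open>real^'n^'n\<close> with \<open>**\<close> is not an instance of the ring classes.  A copy of it with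
  matrix product and the row-sum norm is a Banach algebra, in which \<^const>\<open>mexp\<close> is
  \<^const>\<open>exp\<close>.\<close>

typedef 'n sqmat = "UNIV :: (real^'n::finite^'n) set"
  morphisms mat_of sqmat by auto

setup_lifting type_definition_sqmat

instantiation sqmat :: (finite) real_vector
begin
lift_definition zero_sqmat :: "'a sqmat" is "0" .
lift_definition plus_sqmat :: "'a sqmat \<Rightarrow> 'a sqmat \<Rightarrow> 'a sqmat" is "(+)" .
lift_definition minus_sqmat :: "'a sqmat \<Rightarrow> 'a sqmat \<Rightarrow> 'a sqmat" is "(-)" .
lift_definition uminus_sqmat :: "'a sqmat \<Rightarrow> 'a sqmat" is "uminus" .
lift_definition scaleR_sqmat :: "real \<Rightarrow> 'a sqmat \<Rightarrow> 'a sqmat" is "scaleR" .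
instance by standard (transfer; simp add: algebra_simps scaleR_add_right scaleR_add_left)+
end

instantiation sqmat :: (finite) ring_1
begin
lift_definition one_sqmat :: "'a sqmat" is "mat 1" .
lift_definition times_sqmat :: "'a sqmat \<Rightarrow> 'a sqmat \<Rightarrow> 'a sqmat" is "(**)" .
instance proof
  fix a b c :: "'a sqmat"
  show "a * b * c = a * (b * c)" by transfer (simp add: matrix_mul_assoc)
  show "1 * a = a" by transfer (simp add: matrix_mul_lid)
  show "a * 1 = a" by transfer (simp add: matrix_mul_rid)
  show "(a + b) * c = a * c + b * c"
    by transfer (vector matrix_matrix_mult_def sum.distrib[symmetric] field_simps)
  show "a * (b + c) = a * b + a * c" by transfer (simp add: matrix_add_ldistrib)
  show "(0::'a sqmat) \<noteq> 1" by transfer (simp add: vec_eq_iff mat_def)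
qed
end

instantiation sqmat :: (finite) real_normed_vector
begin
lift_definition norm_sqmat :: "'a sqmat \<Rightarrow> real" is row_sum_norm .
definition dist_sqmat :: "'a sqmat \<Rightarrow> 'a sqmat \<Rightarrow> real" where
  "dist_sqmat x y = norm (x - y)"
definition sgn_sqmat :: "'a sqmat \<Rightarrow> 'a sqmat" where
  "sgn_sqmat x = x /\<^sub>R norm x"
definition uniformity_sqmat :: "('a sqmat \<times> 'a sqmat) filter" where
  "uniformity_sqmat = (INF e\<in>{0 <..}. principal {(x, y). dist x y < e})"
definition open_sqmat :: "'a sqmat set \<Rightarrow> bool" where
  "open_sqmat U = (\<forall>x\<in>U. eventually (\<lambda>(x', y). x' = x \<longrightarrow> y \<in> U) uniformity)"
instance proof
  fix x y :: "'a sqmat" and a :: real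
  show "norm x = 0 \<longleftrightarrow> x = 0" by transfer (rule row_sum_norm_eq_0_iff)
  show "norm (x + y) \<le> norm x + norm y" by transfer (rule row_sum_norm_triangle)
  show "norm (a *\<^sub>R x) = \<bar>a\<bar> * norm x" by transfer (rule row_sum_norm_scaleR)
qed (simp_all add: dist_sqmat_def sgn_sqmat_def uniformity_sqmat_def open_sqmat_def)
end

instance sqmat :: (finite) real_normed_algebra_1
proof
  fix x y :: "'a sqmat" and a :: real
  show "norm (1::'a sqmat) = 1" by transfer (rule row_sum_norm_mat_1)
  show "norm (x * y) \<le> norm x * norm y" by transfer (rule row_sum_norm_mult_le)
  show "a *\<^sub>R x * y = a *\<^sub>R (x * y)" by transfer (simp add: scalar_matrix_assoc)
  show "x * a *\<^sub>R y = a *\<^sub>R (x * y)" by transfer (simp add: matrix_scalar_ac scalar_matrix_assoc)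
qed

lemma mat_of_sqmat [simp]: "mat_of (sqmat A) = A"
  by (simp add: sqmat_inverse)

lemma abs_entry_le_norm_sqmat: "\<bar>mat_of A $ i $ j\<bar> \<le> norm A"
  by (simp add: norm_sqmat.rep_eq abs_entry_le_row_sum_norm)

lemma bounded_linear_mat_of_entry: "bounded_linear (\<lambda>A. mat_of A $ i $ j)"
  by (rule bounded_linear_intro[where K=1])
    (simp_all add: plus_sqmat.rep_eq scaleR_sqmat.rep_eq abs_entry_le_norm_sqmat)

lemmas tendsto_mat_of_entry = bounded_linear.tendsto[OF bounded_linear_mat_of_entry]

lemma tendsto_sqmat_iff_entries:
  "(X \<longlongrightarrow> L) F \<longleftrightarrow> (\<forall>i j. ((\<lambda>x. mat_of (X x) $ i $ j) \<longlongrightarrow> mat_of L $ i $ j) F)"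
proof (intro iffI allI)
  assume entries: "\<forall>i j. ((\<lambda>x. mat_of (X x) $ i $ j) \<longlongrightarrow> mat_of L $ i $ j) F"
  have "((\<lambda>x. \<Sum>i\<in>UNIV. \<Sum>j\<in>UNIV. \<bar>mat_of (X x) $ i $ j - mat_of L $ i $ j\<bar>)
      \<longlongrightarrow> (\<Sum>i\<in>UNIV. \<Sum>j\<in>UNIV. \<bar>mat_of L $ i $ j - mat_of L $ i $ j\<bar>)) F"
    using entries by (intro tendsto_sum tendsto_rabs tendsto_diff tendsto_const) blast
  then have "((\<lambda>x. \<Sum>i\<in>UNIV. \<Sum>j\<in>UNIV. \<bar>mat_of (X x) $ i $ j - mat_of L $ i $ j\<bar>) \<longlongrightarrow> 0) F"
    by simp
  then have "((\<lambda>x. X x - L) \<longlongrightarrow> 0) F"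
    by (rule Lim_null_comparison[rotated], intro always_eventually allI)
      (use row_sum_norm_le_sum_abs[of "mat_of (X _) - mat_of L"] in
        \<open>simp add: norm_sqmat.rep_eq minus_sqmat.rep_eq\<close>)
  then show "(X \<longlongrightarrow> L) F" by (rule LIM_zero_cancel)
qed (rule tendsto_mat_of_entry)

lemma tendsto_mat_of: "(X \<longlongrightarrow> L) F \<Longrightarrow> ((\<lambda>x. mat_of (X x)) \<longlongrightarrow> mat_of L) F"
  by (intro vec_tendstoI) (simp add: tendsto_sqmat_iff_entries)

lemma tendsto_sqmat: "(X \<longlongrightarrow> L) F \<Longrightarrow> ((\<lambda>x. sqmat (X x)) \<longlongrightarrow> sqmat L) F"
  by (simp add: tendsto_sqmat_iff_entries tendsto_vec_nth)

instance sqmat :: (finite) banach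
proof
  fix X :: "nat \<Rightarrow> 'a sqmat"
  assume "Cauchy X"
  have "Cauchy (\<lambda>n. mat_of (X n) $ i $ j)" for i j
  proof (rule metric_CauchyI)
    fix e :: real
    assume "0 < e"
    with \<open>Cauchy X\<close> obtain M where "\<forall>m\<ge>M. \<forall>n\<ge>M. dist (X m) (X n) < e"
      by (meson metric_CauchyD)
    moreover have "dist (mat_of (X m) $ i $ j) (mat_of (X n) $ i $ j) \<le> dist (X m) (X n)" for m n
      using abs_entry_le_norm_sqmat[of "X m - X n" i j]
      by (simp add: dist_real_def dist_norm minus_sqmat.rep_eq)
    ultimately show "\<exists>M. \<forall>m\<ge>M. \<forall>n\<ge>M. dist (mat_of (X m) $ i $ j) (mat_of (X n) $ i $ j) < e"
      by (meson le_less_trans)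
  qed
  then have "X \<longlonglongrightarrow> sqmat (\<chi> i j. lim (\<lambda>n. mat_of (X n) $ i $ j))"
    by (simp add: tendsto_sqmat_iff_entries Cauchy_convergent_iff convergent_LIMSEQ_iff)
  then show "convergent X" by (rule convergentI)
qed

lemma mat_of_power: "mat_of (A ^ k) = matpow (mat_of A) k"
  by (induction k) (simp_all add: one_sqmat.rep_eq times_sqmat.rep_eq power_Suc2 del: power_Suc)

lemma matpow_scaleR: "matpow (c *\<^sub>R Q) k = c ^ k *\<^sub>R matpow Q k"
  by (induction k) (simp_all add: scalar_matrix_assoc[symmetric] matrix_scalar_ac)

lemma sums_exp_sqmat_entry:
  "(\<lambda>n. t ^ n / fact n * matpow Q n $ i $ j) sums (mat_of (exp (t *\<^sub>R sqmat Q)) $ i $ j)"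
proof -
  have "(\<lambda>n. mat_of ((t *\<^sub>R sqmat Q) ^ n /\<^sub>R fact n) $ i $ j) sums (mat_of (exp (t *\<^sub>R sqmat Q)) $ i $ j)"
    using bounded_linear.sums[OF bounded_linear_mat_of_entry exp_converges] .
  moreover have "mat_of ((t *\<^sub>R sqmat Q) ^ n /\<^sub>R fact n) $ i $ j = t ^ n / fact n * matpow Q n $ i $ j" for n
    by (simp add: scaleR_sqmat.rep_eq mat_of_power matpow_scaleR field_simps del: scaleR_power)
  ultimately show ?thesis by simp
qed

lemma mexp_eq_exp: "mexp t Q = mat_of (exp (t *\<^sub>R sqmat Q))"
proof -
  have "(\<Sum>n. t ^ n / fact n * matpow Q n $ i $ j) = mat_of (exp (t *\<^sub>R sqmat Q)) $ i $ j" for i j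
    using sums_exp_sqmat_entry by (rule sums_unique[symmetric])
  then show ?thesis unfolding mexp_def by (simp add: vec_eq_iff)
qed

lemma sums_mexp_entry: "(\<lambda>n. t ^ n / fact n * matpow Q n $ i $ j) sums (mexp t Q $ i $ j)"
  unfolding mexp_eq_exp by (rule sums_exp_sqmat_entry)

lemma mexp_0: "mexp 0 Q = mat 1"
  by (simp add: mexp_eq_exp one_sqmat.rep_eq)

lemma mexp_add: "mexp (s + t) Q = mexp s Q ** mexp t Q"
proof -
  have "(s *\<^sub>R sqmat Q) * (t *\<^sub>R sqmat Q) = (t *\<^sub>R sqmat Q) * (s *\<^sub>R sqmat Q)"
    by (simp add: mult_scaleR_left mult_scaleR_right)
  then show ?thesis
    by (simp add: mexp_eq_exp times_sqmat.rep_eq scaleR_add_left exp_add_commuting)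
qed

definition generator :: "real^'n::finite^'n \<Rightarrow> bool" where
  "generator Q \<longleftrightarrow> (\<forall>i. Q $ i \<in> Eset i)"

lemma generator_row_sum: "generator Q \<Longrightarrow> (\<Sum>j\<in>UNIV. Q $ i $ j) = 0"
  unfolding generator_def Eset_def by (simp add: sum.remove[of UNIV i])

lemma generator_offdiag_nonneg: "generator Q \<Longrightarrow> i \<noteq> j \<Longrightarrow> 0 \<le> Q $ i $ j"
  unfolding generator_def Eset_def by auto

lemma transition_matrix_entry_nonneg: "transition_matrix A \<Longrightarrow> 0 \<le> A $ i $ j"
  unfolding transition_matrix_def by simp

lemma transition_matrix_entry_le_1:
  assumes "transition_matrix A"
  shows "A $ i $ j \<le> 1"
proof -
  have "A $ i $ j \<le> (\<Sum>j\<in>UNIV. A $ i $ j)"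
    by (rule member_le_sum) (use assms in \<open>auto simp: transition_matrix_def\<close>)
  with assms show ?thesis by (simp add: transition_matrix_def)
qed

lemma transition_matrix_mat_1: "transition_matrix (mat 1 :: real^'n::finite^'n)"
  unfolding transition_matrix_def by (simp add: mat_def)

lemma transition_matrix_mult:
  assumes "transition_matrix A" "transition_matrix B"
  shows "transition_matrix (A ** B)"
proof -
  have "(\<Sum>j\<in>UNIV. (A ** B) $ i $ j) = (\<Sum>l\<in>UNIV. A $ i $ l * (\<Sum>j\<in>UNIV. B $ l $ j))" for i
    unfolding matrix_matrix_mult_def by (simp add: sum_distrib_left) (rule sum.swap)
  with assms show ?thesis
    unfolding transition_matrix_def matrix_matrix_mult_def by (auto intro: sum_nonneg)
qed

lemma transition_matrix_matpow: "transition_matrix A \<Longrightarrow> transition_matrix (matpow A k)"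
  by (induction k) (auto intro: transition_matrix_mult transition_matrix_mat_1)

lemma norm_sqmat_transition_matrix: "transition_matrix A \<Longrightarrow> norm (sqmat A) = 1"
  unfolding transition_matrix_def by (simp add: norm_sqmat.rep_eq row_sum_norm_eq_1)

lemma transition_matrix_abs_sum_le:
  assumes "transition_matrix A"
  shows "\<bar>\<Sum>l\<in>UNIV. A $ i $ l * b l\<bar> \<le> (\<Sum>l\<in>UNIV. \<bar>b l\<bar>)"
proof -
  have "\<bar>\<Sum>l\<in>UNIV. A $ i $ l * b l\<bar> \<le> (\<Sum>l\<in>UNIV. \<bar>A $ i $ l * b l\<bar>)"
    by (rule sum_abs)
  also have "\<dots> \<le> (\<Sum>l\<in>UNIV. \<bar>b l\<bar>)"
    using transition_matrix_entry_nonneg[OF assms] transition_matrix_entry_le_1[OF assms]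
    by (intro sum_mono) (simp add: abs_mult mult_left_le_one_le)
  finally show ?thesis .
qed

lemma transition_matrix_mat_1_plus_generator:
  assumes Q: "generator Q" and d: "0 \<le> d" and small: "d * (\<Sum>i\<in>UNIV. \<bar>Q $ i $ i\<bar>) \<le> 1"
  shows "transition_matrix (mat 1 + d *\<^sub>R Q)"
  unfolding transition_matrix_def
proof (intro conjI allI)
  fix i j
  show "0 \<le> (mat 1 + d *\<^sub>R Q) $ i $ j"
  proof (cases "i = j")
    case True
    have "d * \<bar>Q $ i $ i\<bar> \<le> d * (\<Sum>i\<in>UNIV. \<bar>Q $ i $ i\<bar>)"
      using d by (intro mult_left_mono member_le_sum) auto
    moreover have "d * (- \<bar>Q $ i $ i\<bar>) \<le> d * Q $ i $ i"
      using d by (intro mult_left_mono) auto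
    ultimately show ?thesis using True small by (simp add: mat_def)
  next
    case False
    then show ?thesis using generator_offdiag_nonneg[OF Q False] d by (simp add: mat_def)
  qed
next
  fix i
  show "(\<Sum>j\<in>UNIV. (mat 1 + d *\<^sub>R Q) $ i $ j) = 1"
    using generator_row_sum[OF Q, of i]
    by (simp add: sum.distrib sum_distrib_left[symmetric] mat_def)
qed

lemma matpow_nonneg: "(\<And>i j. 0 \<le> P $ i $ j) \<Longrightarrow> 0 \<le> matpow P n $ i $ j"
  by (induction n arbitrary: i j) (simp_all add: mat_def matrix_matrix_mult_def sum_nonneg)

lemma mexp_nonneg_of_nonneg: "(\<And>i j. 0 \<le> P $ i $ j) \<Longrightarrow> 0 \<le> t \<Longrightarrow> 0 \<le> mexp t P $ i $ j"
  by (rule sums_le[OF _ sums_zero sums_mexp_entry]) (simp add: matpow_nonneg)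

lemma exp_add_scaleR_one: "exp (x + r *\<^sub>R 1) = exp r *\<^sub>R exp (x :: 'a::{real_normed_algebra_1,banach})"
proof -
  have "x * (r *\<^sub>R 1) = (r *\<^sub>R 1) * x"
    by simp
  then have "exp (x + r *\<^sub>R 1) = exp x * exp (r *\<^sub>R 1)" by (rule exp_add_commuting)
  also have "exp (r *\<^sub>R (1::'a)) = exp r *\<^sub>R 1"
    using exp_of_real[of r, where 'a='a] unfolding of_real_def .
  finally show ?thesis by simp
qed

text \<open>Uniformization: \<open>Q + c I\<close> has nonnegative entries and commutes with \<open>Q\<close>, so
  \<open>exp (t Q) = exp (-t c) exp (t (Q + c I))\<close> is entrywise nonnegative.\<close>

lemma mexp_nonneg:
  assumes Q: "generator Q" and t: "0 \<le> t"
  shows "0 \<le> mexp t Q $ i $ j"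
proof -
  define c where "c = (\<Sum>i\<in>UNIV. \<bar>Q $ i $ i\<bar>)"
  define P where "P = Q + mat c"
  have P_nonneg: "0 \<le> P $ i $ j" for i j
  proof (cases "i = j")
    case True
    have "\<bar>Q $ i $ i\<bar> \<le> c" unfolding c_def by (rule member_le_sum) auto
    then show ?thesis using True by (simp add: P_def mat_def)
  next
    case False
    then show ?thesis using generator_offdiag_nonneg[OF Q False] by (simp add: P_def mat_def)
  qed
  have "t *\<^sub>R sqmat Q = t *\<^sub>R sqmat P + (- (t * c)) *\<^sub>R 1"
    unfolding P_def by transfer (simp add: vec_eq_iff mat_def algebra_simps)
  then have "mexp t Q $ i $ j = exp (- (t * c)) * mexp t P $ i $ j"
    using exp_add_scaleR_one[of "t *\<^sub>R sqmat P" "- (t * c)"]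
    by (simp add: mexp_eq_exp scaleR_sqmat.rep_eq)
  then show ?thesis using mexp_nonneg_of_nonneg[OF P_nonneg t] by simp
qed

lemma mexp_row_sum:
  assumes Q: "generator Q"
  shows "(\<Sum>j\<in>UNIV. mexp t Q $ i $ j) = 1"
proof -
  have row: "(\<Sum>j\<in>UNIV. matpow Q n $ i $ j) = (if n = 0 then 1 else 0)" for n
  proof (cases n)
    case (Suc m)
    have "(\<Sum>j\<in>UNIV. matpow Q (Suc m) $ i $ j) = (\<Sum>l\<in>UNIV. matpow Q m $ i $ l * (\<Sum>j\<in>UNIV. Q $ l $ j))"
      by (simp add: matrix_matrix_mult_def sum_distrib_left) (rule sum.swap)
    then show ?thesis using generator_row_sum[OF Q] Suc by simp
  qed (simp add: mat_def)
  have "(\<Sum>j\<in>UNIV. t ^ n / fact n * matpow Q n $ i $ j) = (if n = 0 then 1 else 0)" for n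
    unfolding sum_distrib_left[symmetric] row by simp
  moreover have "(\<lambda>n. \<Sum>j\<in>UNIV. t ^ n / fact n * matpow Q n $ i $ j) sums (\<Sum>j\<in>UNIV. mexp t Q $ i $ j)"
    by (intro sums_sum sums_mexp_entry)
  ultimately have "(\<lambda>n. if n = 0 then 1 else 0) sums (\<Sum>j\<in>UNIV. mexp t Q $ i $ j)"
    by simp
  then show ?thesis using sums_single[of 0 "\<lambda>_. 1::real"] sums_unique2 by fastforce
qed

lemma transition_matrix_mexp: "generator Q \<Longrightarrow> 0 \<le> t \<Longrightarrow> transition_matrix (mexp t Q)"
  unfolding transition_matrix_def using mexp_nonneg mexp_row_sum by blast

section \<open>Continuity and Euler approximation of the matrix exponential\<close>

lemma isCont_exp_scaleR: "isCont (\<lambda>t. exp (t *\<^sub>R A)) t"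
  for A :: "'a::{real_normed_algebra_1,banach}"
  using exp_scaleR_has_vector_derivative_right has_vector_derivative_continuous by blast

lemma exp_scaleR_remainder_tendsto:
  fixes A :: "'a::{real_normed_algebra_1,banach}"
  shows "((\<lambda>t. norm (exp (t *\<^sub>R A) - 1 - t *\<^sub>R A) / \<bar>t\<bar>) \<longlongrightarrow> 0) (at 0)"
  using exp_scaleR_has_vector_derivative_right[where t=0 and A=A and T=UNIV]
  unfolding has_vector_derivative_def has_derivative_iff_norm by simp

lemma continuous_on_mexp [continuous_intros]:
  assumes "continuous_on S g"
  shows "continuous_on S (\<lambda>t. mexp (g t) Q)"
  unfolding continuous_on_def mexp_eq_exp
proof (intro ballI tendsto_mat_of)
  fix t
  assume "t \<in> S"
  with assms have "(g \<longlongrightarrow> g t) (at t within S)"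
    by (simp add: continuous_on_def)
  then show "((\<lambda>x. exp (g x *\<^sub>R sqmat Q)) \<longlongrightarrow> exp (g t *\<^sub>R sqmat Q)) (at t within S)"
    by (rule isCont_tendsto_compose[OF isCont_exp_scaleR])
qed

lemma mexp_difference_quotient:
  "((\<lambda>t. (mexp t Q $ i $ j - mat 1 $ i $ j) / t) \<longlongrightarrow> Q $ i $ j) (at_right 0)"
proof -
  have "((\<lambda>t. mat_of (exp (t *\<^sub>R sqmat Q)) $ i $ j) has_vector_derivative
      mat_of (exp (0 *\<^sub>R sqmat Q) * sqmat Q) $ i $ j) (at 0 within {0<..})"
    by (rule bounded_linear.has_vector_derivative[OF bounded_linear_mat_of_entry
          exp_scaleR_has_vector_derivative_right])
  then show ?thesis
    by (simp add: has_real_derivative_iff_has_vector_derivative[symmetric] has_field_derivative_iff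
        mexp_eq_exp[symmetric] mexp_0)
qed

lemma norm_power_diff_le:
  fixes x y :: "'a::real_normed_algebra_1"
  assumes "norm x \<le> 1" "norm y \<le> 1"
  shows "norm (x ^ k - y ^ k) \<le> real k * norm (x - y)"
proof (induction k)
  case (Suc k)
  have "norm (x ^ k) \<le> 1"
    using norm_power_ineq[of x k] power_le_one[OF norm_ge_zero assms(1), of k] by linarith
  then have "norm (x ^ k * (x - y)) \<le> norm (x - y)"
    by (meson mult_left_le_one_le norm_ge_zero norm_mult_ineq order_trans)
  moreover have "norm ((x ^ k - y ^ k) * y) \<le> real k * norm (x - y)"
    using norm_mult_ineq[of "x ^ k - y ^ k" y] Suc.IH assms(2)
    by (meson mult_right_le_one_le norm_ge_zero order_trans)
  moreover have "x ^ Suc k - y ^ Suc k = x ^ k * (x - y) + (x ^ k - y ^ k) * y"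
    by (simp add: power_Suc2 algebra_simps del: power_Suc)
  then have "norm (x ^ Suc k - y ^ Suc k) \<le> norm (x ^ k * (x - y)) + norm ((x ^ k - y ^ k) * y)"
    by (metis norm_triangle_ineq)
  moreover have "real (Suc k) * norm (x - y) = norm (x - y) + real k * norm (x - y)"
    by (simp add: algebra_simps)
  ultimately show ?case by linarith
qed simp

lemma exp_scaleR_power: "exp (d *\<^sub>R A) ^ k = exp ((real k * d) *\<^sub>R A)"
  for A :: "'a::{real_normed_algebra_1,banach}"
proof (induction k)
  case (Suc k)
  have "(d *\<^sub>R A) * ((real k * d) *\<^sub>R A) = ((real k * d) *\<^sub>R A) * (d *\<^sub>R A)"
    by (simp add: mult_scaleR_left mult_scaleR_right)
  then have "exp ((real (Suc k) * d) *\<^sub>R A) = exp (d *\<^sub>R A) * exp ((real k * d) *\<^sub>R A)"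
    by (simp add: exp_add_commuting[symmetric] algebra_simps)
  then show ?case using Suc.IH by simp
qed simp

lemma power_tendsto_of_close:
  fixes X Y :: "nat \<Rightarrow> 'a::real_normed_algebra_1"
  assumes "\<And>m. norm (X m) \<le> 1" "\<And>m. norm (Y m) \<le> 1"
    and close: "(\<lambda>m. real (k m) * norm (X m - Y m)) \<longlonglongrightarrow> 0"
    and Y_lim: "(\<lambda>m. Y m ^ k m) \<longlonglongrightarrow> L"
  shows "(\<lambda>m. X m ^ k m) \<longlonglongrightarrow> L"
proof -
  have "(\<lambda>m. X m ^ k m - Y m ^ k m) \<longlonglongrightarrow> 0"
    using close by (rule Lim_null_comparison[rotated]) (simp add: norm_power_diff_le assms(1,2))
  from tendsto_add[OF this Y_lim] show ?thesis
    by simp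
qed

text \<open>Both \<open>I + d\<^sub>m Q\<^sub>m\<close> and \<open>exp (d\<^sub>m G)\<close> are stochastic, hence
  of norm \<open>1\<close>, and they differ by \<open>o(d\<^sub>m)\<close>.\<close>

lemma matpow_tendsto_mexp:
  fixes G :: "real^'n::finite^'n" and Q :: "nat \<Rightarrow> real^'n^'n"
  assumes G: "generator G"
    and d_pos: "\<And>m. 0 < d m" and d_lim: "d \<longlonglongrightarrow> 0" and Q_lim: "Q \<longlonglongrightarrow> G"
    and stochastic: "\<And>m. transition_matrix (mat 1 + d m *\<^sub>R Q m)"
    and k_lim: "(\<lambda>m. real (k m) * d m) \<longlonglongrightarrow> s"
  shows "(\<lambda>m. matpow (mat 1 + d m *\<^sub>R Q m) (k m)) \<longlonglongrightarrow> mexp s G"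
proof -
  define A where "A = sqmat G"
  define X where "X m = sqmat (mat 1 + d m *\<^sub>R Q m)" for m
  define Y where "Y m = exp (d m *\<^sub>R A)" for m
  define r where "r t = norm (exp (t *\<^sub>R A) - 1 - t *\<^sub>R A) / \<bar>t\<bar>" for t
  have "X m - Y m = d m *\<^sub>R (sqmat (Q m) - A) - (exp (d m *\<^sub>R A) - 1 - d m *\<^sub>R A)" for m
    unfolding X_def Y_def A_def
    by (rule mat_of_inject[THEN iffD1])
      (simp add: plus_sqmat.rep_eq minus_sqmat.rep_eq scaleR_sqmat.rep_eq one_sqmat.rep_eq algebra_simps)
  then have "norm (X m - Y m) \<le> d m * (norm (sqmat (Q m) - A) + r (d m))" for m
    using d_pos[of m] norm_triangle_ineq4[of "d m *\<^sub>R (sqmat (Q m) - A)" "exp (d m *\<^sub>R A) - 1 - d m *\<^sub>R A"]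
    by (simp add: r_def distrib_left)
  then have bound: "real (k m) * norm (X m - Y m) \<le> real (k m) * d m * (norm (sqmat (Q m) - A) + r (d m))" for m
    using mult_left_mono[of "norm (X m - Y m)" _ "real (k m)"] by (simp add: mult.assoc)
  have "isCont r 0"
    unfolding isCont_def r_def using exp_scaleR_remainder_tendsto by simp
  then have r_lim: "(\<lambda>m. r (d m)) \<longlonglongrightarrow> 0"
    using isCont_tendsto_compose[OF _ d_lim, of r] by (simp add: r_def)
  have "(\<lambda>m. norm (sqmat (Q m) - A)) \<longlonglongrightarrow> 0"
    unfolding A_def using tendsto_norm_zero[OF LIM_zero[OF tendsto_sqmat[OF Q_lim]]] .
  from tendsto_mult[OF k_lim tendsto_add[OF this r_lim]]
  have "(\<lambda>m. real (k m) * d m * (norm (sqmat (Q m) - A) + r (d m))) \<longlonglongrightarrow> 0"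
    by simp
  then have close: "(\<lambda>m. real (k m) * norm (X m - Y m)) \<longlonglongrightarrow> 0"
    by (rule Lim_null_comparison[rotated]) (simp add: bound)
  have Y_lim: "(\<lambda>m. Y m ^ k m) \<longlonglongrightarrow> exp (s *\<^sub>R A)"
    unfolding Y_def exp_scaleR_power by (rule isCont_tendsto_compose[OF isCont_exp_scaleR k_lim])
  have norms: "norm (X m) = 1" "norm (Y m) = 1" for m
    using norm_sqmat_transition_matrix[OF stochastic]
      norm_sqmat_transition_matrix[OF transition_matrix_mexp[OF G less_imp_le[OF d_pos]]]
    by (simp_all add: X_def Y_def A_def mexp_eq_exp mat_of_inverse)
  have "(\<lambda>m. X m ^ k m) \<longlonglongrightarrow> exp (s *\<^sub>R A)"
    by (rule power_tendsto_of_close[OF _ _ close Y_lim]) (simp_all add: norms)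
  from tendsto_mat_of[OF this] show ?thesis
    by (simp add: X_def A_def mat_of_power mexp_eq_exp)
qed

lemma set_integral_sum:
  fixes g :: "'i \<Rightarrow> 'a \<Rightarrow> real"
  assumes "finite I" "\<And>j. j \<in> I \<Longrightarrow> set_integrable M A (g j)"
  shows "set_integrable M A (\<lambda>x. \<Sum>j\<in>I. g j x)"
    and "(LINT x:A|M. (\<Sum>j\<in>I. g j x)) = (\<Sum>j\<in>I. LINT x:A|M. g j x)"
proof -
  have int: "integrable M (\<lambda>x. indicator A x *\<^sub>R g j x)" if "j \<in> I" for j
    using assms(2)[OF that] by (simp add: set_integrable_def)
  have sum: "(\<lambda>x. indicator A x *\<^sub>R (\<Sum>j\<in>I. g j x)) = (\<lambda>x. \<Sum>j\<in>I. indicator A x *\<^sub>R g j x)"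
    by (simp add: sum_distrib_left)
  show "set_integrable M A (\<lambda>x. \<Sum>j\<in>I. g j x)"
    unfolding set_integrable_def sum using int by (intro Bochner_Integration.integrable_sum) auto
  show "(LINT x:A|M. (\<Sum>j\<in>I. g j x)) = (\<Sum>j\<in>I. LINT x:A|M. g j x)"
    unfolding set_lebesgue_integral_def sum using int by (intro Bochner_Integration.integral_sum) auto
qed

lemma integrable_enn2real:
  assumes "f \<in> borel_measurable M" "(\<integral>\<^sup>+ x. f x \<partial>M) < \<infinity>"
  shows "integrable M (\<lambda>x. enn2real (f x))"
proof (rule integrableI_bounded)
  show "(\<lambda>x. enn2real (f x)) \<in> borel_measurable M"
    using assms(1) by measurable
  have "(\<integral>\<^sup>+ x. ennreal (norm (enn2real (f x))) \<partial>M) \<le> (\<integral>\<^sup>+ x. f x \<partial>M)"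
    by (intro nn_integral_mono) (simp add: ennreal_enn2real_if)
  with assms(2) show "(\<integral>\<^sup>+ x. ennreal (norm (enn2real (f x))) \<partial>M) < \<infinity>"
    by (meson le_less_trans)
qed

lemma average_tendsto_at_right:
  fixes g :: "real \<Rightarrow> real"
  assumes g: "continuous_on {0..} g"
  shows "((\<lambda>e. (LBINT t:{0..e}. g t) / e) \<longlongrightarrow> g 0) (at_right 0)"
proof -
  have "((\<lambda>x. integral {0..x} g) has_real_derivative g 0) (at 0 within {0..1})"
    by (rule integral_has_real_derivative) (auto intro: continuous_on_subset[OF g])
  then have "((\<lambda>e. integral {0..e} g / e) \<longlongrightarrow> g 0) (at_right 0)"
    by (simp add: has_field_derivative_iff at_within_Icc_at_right)
  moreover have "(LBINT t:{0..e}. g t) = integral {0..e} g" for e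
    by (rule set_borel_integral_eq_integral(2), rule borel_integrable_atLeastAtMost')
      (auto intro: continuous_on_subset[OF g])
  ultimately show ?thesis by simp
qed

lemma set_integral_shift_halfline:
  fixes \<phi> :: "real \<Rightarrow> real"
  assumes \<phi>: "continuous_on {0..} \<phi>"
  shows "(LBINT t:{e<..}. \<phi> (t - e)) = (LBINT s:{0..}. \<phi> s)"
proof -
  have "(LBINT t:{e<..}. \<phi> (t - e)) = (\<integral>x. indicator {e<..} (e + x) *\<^sub>R \<phi> (e + x - e) \<partial>lborel)"
    using lborel_integral_real_affine[of 1 "\<lambda>t. indicator {e<..} t *\<^sub>R \<phi> (t - e)" e]
    by (simp add: set_lebesgue_integral_def)
  also have "\<dots> = (\<integral>x. indicator {0<..} x *\<^sub>R \<phi> x \<partial>lborel)"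
    by (simp add: indicator_def)
  also have "\<dots> = (\<integral>x. indicator {0..} x *\<^sub>R \<phi> x \<partial>lborel)"
  proof (rule integral_cong_AE)
    have "continuous_on {0<..} \<phi>"
      by (rule continuous_on_subset[OF \<phi>]) auto
    then show "(\<lambda>x. indicator {0<..} x *\<^sub>R \<phi> x) \<in> borel_measurable lborel"
      using borel_measurable_continuous_on_indicator[of "{0<..}" \<phi>] by auto
    show "(\<lambda>x. indicator {0..} x *\<^sub>R \<phi> x) \<in> borel_measurable lborel"
      using borel_measurable_continuous_on_indicator[of "{0..}" \<phi>] \<phi> by auto
    show "AE x in lborel. indicator {0<..} x *\<^sub>R \<phi> x = indicator {0..} x *\<^sub>R \<phi> x"
      using AE_lborel_singleton[of "0::real"] by eventually_elim (auto simp: indicator_def)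
  qed
  finally show ?thesis by (simp add: set_lebesgue_integral_def)
qed

lemma dominated_convergence_halfline:
  fixes g :: "nat \<Rightarrow> real \<Rightarrow> real" and g0 :: "real \<Rightarrow> real"
  assumes meas: "\<And>m. (\<lambda>s. indicator {0..} s * g m s) \<in> borel_measurable borel"
    and lim: "\<And>s. 0 \<le> s \<Longrightarrow> (\<lambda>m. g m s) \<longlonglongrightarrow> g0 s"
    and bounded: "\<And>m s. 0 \<le> s \<Longrightarrow> s < T \<Longrightarrow> \<bar>g m s\<bar> \<le> C"
    and h: "integrable lborel h"
    and dominated: "\<And>m. AE s in lborel. T \<le> s \<longrightarrow> \<bar>g m s\<bar> \<le> h s"
  shows "set_integrable lborel {0..} g0" "\<And>m. set_integrable lborel {0..} (g m)"
    "(\<lambda>m. LBINT s:{0..}. g m s) \<longlonglongrightarrow> (LBINT s:{0..}. g0 s)"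
proof -
  define w where "w s = indicator {0..T} s * \<bar>C\<bar> + \<bar>h s\<bar>" for s
  have w: "integrable lborel w"
    unfolding w_def
    by (intro Bochner_Integration.integrable_add integrable_mult_left integrable_real_indicator
        integrable_abs h) (auto simp: emeasure_lborel_Icc_eq)
  have lim': "(\<lambda>m. indicator {0..} s * g m s) \<longlonglongrightarrow> indicator {0..} s * g0 s" for s
    by (cases "0 \<le> s") (auto intro: lim tendsto_mult_left)
  have meas0: "(\<lambda>s. indicator {0..} s * g0 s) \<in> borel_measurable lborel"
    using borel_measurable_LIMSEQ_real[OF lim' meas] by simp
  have meas': "(\<lambda>s. indicator {0..} s * g m s) \<in> borel_measurable lborel" for m
    using meas by simp
  have lim_AE: "AE s in lborel. (\<lambda>m. indicator {0..} s * g m s) \<longlonglongrightarrow> indicator {0..} s * g0 s"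
    using lim' by simp
  have bound: "AE s in lborel. norm (indicator {0..} s * g m s) \<le> w s" for m
    using dominated[of m]
  proof eventually_elim
    case (elim s)
    have "0 \<le> indicator {0..T} s * \<bar>C\<bar>" by simp
    moreover have "\<bar>g m s\<bar> \<le> \<bar>C\<bar>" if "0 \<le> s" "s < T"
      using bounded[OF that, of m] by linarith
    ultimately show ?case
      using elim by (auto simp: w_def indicator_def not_less)
  qed
  have "integrable lborel (\<lambda>s. indicator {0..} s * g0 s)"
    "integrable lborel (\<lambda>s. indicator {0..} s * g m s)"
    "(\<lambda>m. LINT s|lborel. indicator {0..} s * g m s) \<longlonglongrightarrow> (LINT s|lborel. indicator {0..} s * g0 s)" for m
    using integrable_dominated_convergence[OF meas0 meas' w lim_AE bound]
      integrable_dominated_convergence2[OF meas0 meas' w lim_AE bound]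
      integral_dominated_convergence[OF meas0 meas' w lim_AE bound]
    by blast+
  then show "set_integrable lborel {0..} g0" "\<And>m. set_integrable lborel {0..} (g m)"
    "(\<lambda>m. LBINT s:{0..}. g m s) \<longlonglongrightarrow> (LBINT s:{0..}. g0 s)"
    by (auto simp: set_integrable_def set_lebesgue_integral_def)
qed

lemma nat_floor_divide_eq_iff:
  assumes "0 < d"
  shows "0 \<le> s \<and> nat \<lfloor>s / d\<rfloor> = k \<longleftrightarrow> real k * d \<le> s \<and> s < real (Suc k) * d"
proof -
  have "0 \<le> s \<and> nat \<lfloor>s / d\<rfloor> = k \<longleftrightarrow> \<lfloor>s / d\<rfloor> = int k"
  proof
    assume "\<lfloor>s / d\<rfloor> = int k"
    then have "0 \<le> s / d" by (metis of_nat_0_le_iff zero_le_floor)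
    with assms \<open>\<lfloor>s / d\<rfloor> = int k\<close> show "0 \<le> s \<and> nat \<lfloor>s / d\<rfloor> = k"
      by (simp add: zero_le_divide_iff)
  qed (use assms in auto)
  also have "\<dots> \<longleftrightarrow> real k * d \<le> s \<and> s < real (Suc k) * d"
    using assms by (simp add: floor_eq_iff field_simps)
  finally show ?thesis .
qed

lemma set_integral_step_cell:
  assumes "0 < d"
  shows "(LBINT s:{real k * d..<real (Suc k) * d}. c (nat \<lfloor>s / d\<rfloor>)) = d * c k"
proof -
  have "(LBINT s:{real k * d..<real (Suc k) * d}. c (nat \<lfloor>s / d\<rfloor>))
      = (LBINT s:{real k * d..<real (Suc k) * d}. c k)"
  proof (intro set_lebesgue_integral_cong allI impI)
    fix s
    assume "s \<in> {real k * d..<real (Suc k) * d}"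
    then have "nat \<lfloor>s / d\<rfloor> = k"
      using nat_floor_divide_eq_iff[OF assms, of s k] by simp
    then show "c (nat \<lfloor>s / d\<rfloor>) = c k" by simp
  qed simp
  also have "\<dots> = d * c k"
    using assms set_integral_const[of "{real k * d..<real (Suc k) * d}" lborel "c k"]
    by (simp add: algebra_simps)
  finally show ?thesis .
qed

lemma step_function_sums:
  fixes b :: "nat \<Rightarrow> real"
  assumes d: "0 < d" and int: "set_integrable lborel {0..} (\<lambda>s. b (nat \<lfloor>s / d\<rfloor>))"
  shows "(\<lambda>k. d * b k) sums (LBINT s:{0..}. b (nat \<lfloor>s / d\<rfloor>))"
proof -
  define A where "A k = {real k * d..<real (Suc k) * d}" for k
  have mem_A: "s \<in> A k \<longleftrightarrow> 0 \<le> s \<and> nat \<lfloor>s / d\<rfloor> = k" for s k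
    unfolding A_def using nat_floor_divide_eq_iff[OF d] by simp
  have A_disj: "A k \<inter> A l = {}" if "k \<noteq> l" for k l
    using that unfolding set_eq_iff Int_iff mem_A by auto
  have A_sub: "A k \<subseteq> {0..}" for k
    using mem_A by blast
  have A_halfline: "(\<Union>k. A k) = {0..}"
    using mem_A by auto
  have A_sets: "A k \<in> sets lborel" for k
    by (simp add: A_def)
  have cell: "(LBINT s:A k. c (nat \<lfloor>s / d\<rfloor>)) = d * c k" for k and c :: "nat \<Rightarrow> real"
    unfolding A_def by (rule set_integral_step_cell[OF d])
  have int_abs: "set_integrable lborel {0..} (\<lambda>s. \<bar>b (nat \<lfloor>s / d\<rfloor>)\<bar>)"
    using int by (simp add: set_integrable_abs)
  have "(\<Sum>k<N. d * \<bar>b k\<bar>) \<le> (LBINT s:{0..}. \<bar>b (nat \<lfloor>s / d\<rfloor>)\<bar>)" for N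
  proof -
    have int_N: "set_integrable lborel (\<Union>k<N. A k) (\<lambda>s. \<bar>b (nat \<lfloor>s / d\<rfloor>)\<bar>)"
      by (rule set_integrable_subset[OF int_abs]) (use A_sets A_sub in auto)
    have "(\<Sum>k<N. d * \<bar>b k\<bar>) = (\<Sum>k<N. LBINT s:A k. \<bar>b (nat \<lfloor>s / d\<rfloor>)\<bar>)"
      using cell[of _ "\<lambda>k. \<bar>b k\<bar>"] by simp
    also have "\<dots> = (LBINT s:(\<Union>k<N. A k). \<bar>b (nat \<lfloor>s / d\<rfloor>)\<bar>)"
      using A_disj A_sets
      by (intro set_integral_finite_Union[symmetric])
        (auto simp: disjoint_family_on_def intro: set_integrable_subset[OF int_N A_sets])
    also have "\<dots> \<le> (LBINT s:{0..}. \<bar>b (nat \<lfloor>s / d\<rfloor>)\<bar>)"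
      using int_N int_abs A_sub unfolding set_integrable_def set_lebesgue_integral_def
      by (intro integral_mono) (auto split: split_indicator)
    finally show ?thesis .
  qed
  then have "summable (\<lambda>k. d * \<bar>b k\<bar>)"
    by (rule summableI_nonneg_bounded[rotated]) (use d in simp)
  then have "summable (\<lambda>k. d * b k)"
    using d by (auto intro: summable_rabs_cancel simp: abs_mult)
  moreover have "(LBINT s:(\<Union>k. A k). b (nat \<lfloor>s / d\<rfloor>)) = (\<Sum>k. LBINT s:A k. b (nat \<lfloor>s / d\<rfloor>))"
    using A_sets A_disj int unfolding A_halfline[symmetric] by (rule lebesgue_integral_countable_add)
  ultimately show ?thesis
    by (simp add: A_halfline sums_iff cell)
qed

lemma set_integral_split_at:
  fixes g :: "real \<Rightarrow> real"
  assumes "0 \<le> e" "set_integrable lborel {0..e} g" "set_integrable lborel {e<..} g"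
  shows "(LBINT t:{0..}. g t) = (LBINT t:{0..e}. g t) + (LBINT t:{e<..}. g t)"
proof -
  have "{0..} = {0..e} \<union> {e<..}"
    using assms(1) by auto
  moreover have "{0..e} \<inter> {e<..} = {}"
    by auto
  ultimately show ?thesis
    using set_integral_Un[of "{0..e}" "{e<..}" lborel g] assms(2,3) by simp
qed

section \<open>The discretized problem\<close>

lemma mat_1_plus_genOf: "d \<noteq> 0 \<Longrightarrow> mat 1 + d *\<^sub>R genOf d u = u"
  unfolding genOf_def by simp

lemma genOf_mat_1_plus: "d \<noteq> 0 \<Longrightarrow> genOf d (mat 1 + d *\<^sub>R Q) = Q"
  unfolding genOf_def by simp

lemma row_sum_mult_eq_genOf:
  assumes "d \<noteq> 0"
  shows "(\<Sum>j\<in>UNIV. u $ i $ j * w $ j) = w $ i + d * (genOf d u $ i \<bullet> w)"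
proof -
  have "(\<Sum>j\<in>UNIV. u $ i $ j * w $ j) = (\<Sum>j\<in>UNIV. (mat 1 + d *\<^sub>R genOf d u) $ i $ j * w $ j)"
    by (simp add: mat_1_plus_genOf[OF assms])
  also have "\<dots> = (\<Sum>j\<in>UNIV. mat 1 $ i $ j * w $ j) + d * (\<Sum>j\<in>UNIV. genOf d u $ i $ j * w $ j)"
    by (simp add: algebra_simps sum.distrib sum_distrib_left)
  also have "(\<Sum>j\<in>UNIV. mat 1 $ i $ j * w $ j) = (\<Sum>j\<in>UNIV. if i = j then w $ j else 0)"
    by (rule sum.cong) (auto simp: mat_def)
  finally show ?thesis by (simp add: inner_vec_def)
qed

lemma kappa_eq_genOf:
  fixes u :: "real^'n::finite^'n"
  shows "kappa f d k l (u $ l) = f (real k * d) l (genOf d u $ l) * d"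
proof -
  have "(mat 1 :: real^'n^'n) $ l = axis l 1"
    by (simp add: vec_eq_iff mat_def axis_def)
  then show ?thesis
    unfolding kappa_def genOf_def by (simp add: algebra_simps)
qed

text \<open>On \<open>[k d, (k + 1) d)\<close> this is the expected payoff rate at step \<open>k + 1\<close> of the discrete
  chain with transition matrix \<open>U\<close> started in \<open>j\<close>; its integral over \<open>[0, \<infinity>)\<close> is the
  discrete value collected from time \<open>1\<close> on.\<close>

definition step_payoff_rate ::
    "(real \<Rightarrow> 'n::finite \<Rightarrow> real^'n \<Rightarrow> real) \<Rightarrow> real \<Rightarrow> real^'n^'n \<Rightarrow> 'n \<Rightarrow> real \<Rightarrow> real" where
  "step_payoff_rate f d U j s = (\<Sum>l\<in>UNIV. matpow U (nat \<lfloor>s / d\<rfloor>) $ j $ l *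
      f (real (Suc (nat \<lfloor>s / d\<rfloor>)) * d) l (genOf d U $ l))"

lemma sums_step_payoff_rate:
  assumes d: "0 < d" and int: "set_integrable lborel {0..} (step_payoff_rate f d U j)"
  shows "(\<lambda>k. \<Sum>l\<in>UNIV. matpow U k $ j $ l * kappa f d (Suc k) l (U $ l))
    sums (LBINT s:{0..}. step_payoff_rate f d U j s)"
proof -
  define b where "b k = (\<Sum>l\<in>UNIV. matpow U k $ j $ l * f (real (Suc k) * d) l (genOf d U $ l))" for k
  have "step_payoff_rate f d U j = (\<lambda>s. b (nat \<lfloor>s / d\<rfloor>))"
    by (simp add: fun_eq_iff step_payoff_rate_def b_def)
  moreover have "(\<Sum>l\<in>UNIV. matpow U k $ j $ l * kappa f d (Suc k) l (U $ l)) = d * b k" for k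
    by (simp add: b_def kappa_eq_genOf sum_distrib_left algebra_simps)
  ultimately show ?thesis
    using step_function_sums[OF d, of b] int by simp
qed

lemma Vcat_eq_continuation:
  assumes "\<And>j. (\<lambda>k. \<Sum>l\<in>UNIV. matpow U k $ j $ l * kappa f d (Suc k) l (U $ l)) sums w $ j"
  shows "Vcat f d u U i = kappa f d 0 i (u $ i) + (\<Sum>j\<in>UNIV. u $ i $ j * w $ j)"
proof -
  have "(\<lambda>k. \<Sum>j\<in>UNIV. u $ i $ j * (\<Sum>l\<in>UNIV. matpow U k $ j $ l * kappa f d (Suc k) l (U $ l)))
      sums (\<Sum>j\<in>UNIV. u $ i $ j * w $ j)"
    by (intro sums_sum sums_mult assms)
  then show ?thesis
    unfolding Vcat_def by (simp add: sums_iff sum_distrib_left mult.assoc)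
qed

lemma Vdisc_eq_continuation:
  assumes "\<And>j. (\<lambda>k. \<Sum>l\<in>UNIV. matpow U k $ j $ l * kappa f d (Suc k) l (U $ l)) sums w $ j"
  shows "Vdisc f d U i = kappa f d 0 i (U $ i) + (\<Sum>j\<in>UNIV. U $ i $ j * w $ j)"
proof -
  define a where "a k = (\<Sum>j\<in>UNIV. matpow U k $ i $ j * kappa f d k j (U $ j))" for k
  have commute: "matpow U k ** U = U ** matpow U k" for k
    by (induction k) (simp_all add: matrix_mul_assoc[symmetric])
  have "a (Suc k) = (\<Sum>l\<in>UNIV. U $ i $ l * (\<Sum>j\<in>UNIV. matpow U k $ l $ j * kappa f d (Suc k) j (U $ j)))" for k
  proof -
    have "a (Suc k) = (\<Sum>j\<in>UNIV. (U ** matpow U k) $ i $ j * kappa f d (Suc k) j (U $ j))"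
      unfolding a_def by (simp add: commute)
    then show ?thesis
      unfolding matrix_matrix_mult_def
      by (simp add: sum_distrib_left sum_distrib_right mult.assoc) (rule sum.swap)
  qed
  moreover have "(\<lambda>k. \<Sum>l\<in>UNIV. U $ i $ l * (\<Sum>j\<in>UNIV. matpow U k $ l $ j * kappa f d (Suc k) j (U $ j)))
      sums (\<Sum>l\<in>UNIV. U $ i $ l * w $ l)"
    by (intro sums_sum sums_mult assms)
  ultimately have "(\<lambda>k. a (Suc k)) sums (\<Sum>l\<in>UNIV. U $ i $ l * w $ l)"
    by simp
  then have "a sums ((\<Sum>l\<in>UNIV. U $ i $ l * w $ l) + a 0)"
    by (simp add: sums_Suc_iff)
  moreover have "a 0 = (\<Sum>j\<in>UNIV. if i = j then kappa f d 0 j (U $ j) else 0)"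
    unfolding a_def by (rule sum.cong) (auto simp: mat_def)
  ultimately show ?thesis
    unfolding Vdisc_def a_def[symmetric] by (simp add: sums_iff)
qed

lemma discrete_equilibrium_inequality:
  assumes d: "0 < d" and eq: "Vcat f d u U i \<le> Vdisc f d U i"
    and w: "\<And>j. (\<lambda>k. \<Sum>l\<in>UNIV. matpow U k $ j $ l * kappa f d (Suc k) l (U $ l)) sums w $ j"
  shows "f 0 i (genOf d u $ i) + genOf d u $ i \<bullet> w \<le> f 0 i (genOf d U $ i) + genOf d U $ i \<bullet> w"
proof -
  have "d * (f 0 i (genOf d u $ i) + genOf d u $ i \<bullet> w) \<le> d * (f 0 i (genOf d U $ i) + genOf d U $ i \<bullet> w)"
    using eq d
    unfolding Vcat_eq_continuation[OF w] Vdisc_eq_continuation[OF w] kappa_eq_genOf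
      row_sum_mult_eq_genOf[OF less_imp_neq[OF d, symmetric]] by (simp add: algebra_simps)
  with d show ?thesis by simp
qed

locale regular_payoff =
  fixes f :: "real \<Rightarrow> 'n::finite \<Rightarrow> real^'n \<Rightarrow> real" and D :: "'n \<Rightarrow> (real^'n) set" and T :: real
  assumes D_subset_Eset: "\<And>i. D i \<subseteq> Eset i"
    and integrable_payoff_sup: "\<And>c. c > 0 \<Longrightarrow>
      (\<integral>\<^sup>+ t. indicator {0..} t *
         (SUP i. SUP q\<in>{q\<in>D i. norm q \<le> c}. ennreal \<bar>f t i q\<bar>) \<partial>lborel) < \<infinity>"
    and T_pos: "0 < T"
    and payoff_decreasing: "\<And>i q s t. q \<in> D i \<Longrightarrow> T \<le> s \<Longrightarrow> s \<le> t \<Longrightarrow> \<bar>f t i q\<bar> \<le> \<bar>f s i q\<bar>"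
    and payoff_continuous: "\<And>i. continuous_on ({0..} \<times> D i) (\<lambda>(t, q). f t i q)"
begin

lemma admissible_row: "Q \<in> admissible D \<Longrightarrow> Q $ l \<in> D l"
  unfolding admissible_def by auto

lemma admissible_generator: "Q \<in> admissible D \<Longrightarrow> generator Q"
  using D_subset_Eset unfolding admissible_def generator_def by blast

lemma continuous_on_payoff:
  assumes "q \<in> D l"
  shows "continuous_on {0..} (\<lambda>t. f t l q)"
proof -
  have "continuous_on {0..} ((\<lambda>(t, q). f t l q) \<circ> (\<lambda>t. (t, q)))"
    using assms by (intro continuous_on_compose continuous_on_subset[OF payoff_continuous])
      (auto intro: continuous_intros)
  then show ?thesis by (simp add: o_def)
qed

lemma tendsto_payoff:
  assumes "t \<longlonglongrightarrow> t0" "q \<longlonglongrightarrow> q0" "\<And>m. 0 \<le> t m" "\<And>m. q m \<in> D l" "0 \<le> t0" "q0 \<in> D l"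
  shows "(\<lambda>m. f (t m) l (q m)) \<longlonglongrightarrow> f t0 l q0"
  using continuous_on_tendsto_compose[OF payoff_continuous tendsto_Pair[OF assms(1,2)]] assms(3-)
  by simp

lemma payoff_bounded_on_compact:
  assumes "compact K" "K \<subseteq> {0..} \<times> D l"
  obtains C where "\<And>t q. (t, q) \<in> K \<Longrightarrow> \<bar>f t l q\<bar> \<le> C"
proof -
  have "compact ((\<lambda>(t, q). f t l q) ` K)"
    by (rule compact_continuous_image[OF continuous_on_subset[OF payoff_continuous assms(2)] assms(1)])
  then have "bounded ((\<lambda>(t, q). f t l q) ` K)"
    by (rule compact_imp_bounded)
  then obtain C where C: "\<forall>y\<in>(\<lambda>(t, q). f t l q) ` K. norm y \<le> C"
    unfolding bounded_iff by blast
  show ?thesis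
  proof (rule that)
    fix t q
    assume "(t, q) \<in> K"
    then show "\<bar>f t l q\<bar> \<le> C" using C by force
  qed
qed

definition payoff_sup :: "real \<Rightarrow> real \<Rightarrow> ennreal" where
  "payoff_sup c t = (SUP i. SUP q\<in>{q\<in>D i. norm q \<le> c}. ennreal \<bar>f t i q\<bar>)"

lemma payoff_bounded_on_interval:
  assumes "q \<in> D l"
  shows "\<exists>C. \<forall>t\<in>{0..b}. \<bar>f t l q\<bar> \<le> C"
proof -
  have "compact ({0..b} \<times> {q})" "{0..b} \<times> {q} \<subseteq> {0..} \<times> D l"
    using assms by (auto intro: compact_Times)
  then show ?thesis
    by (metis payoff_bounded_on_compact SigmaI singletonI)
qed

lemma payoff_le_payoff_sup: "q \<in> D l \<Longrightarrow> norm q \<le> c \<Longrightarrow> ennreal \<bar>f t l q\<bar> \<le> payoff_sup c t"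
  unfolding payoff_sup_def by (rule SUP_upper2[of l]) (auto intro: SUP_upper)

lemma integrable_payoff:
  assumes q: "q \<in> D l"
  shows "integrable lborel (\<lambda>t. indicator {0..} t * f t l q)"
proof (rule integrableI_bounded)
  show "(\<lambda>t. indicator {0..} t * f t l q) \<in> borel_measurable lborel"
    using borel_measurable_continuous_on_indicator[OF _ continuous_on_payoff[OF q]] by simp
  have "(\<integral>\<^sup>+ t. ennreal (norm (indicator {0..} t * f t l q)) \<partial>lborel)
      \<le> (\<integral>\<^sup>+ t. indicator {0..} t * payoff_sup (norm q + 1) t \<partial>lborel)"
    using payoff_le_payoff_sup[OF q, of "norm q + 1"]
    by (intro nn_integral_mono) (auto simp: indicator_def)
  also have "\<dots> < \<infinity>"
    unfolding payoff_sup_def by (rule integrable_payoff_sup) (simp add: add_nonneg_pos)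
  finally show "(\<integral>\<^sup>+ t. ennreal (norm (indicator {0..} t * f t l q)) \<partial>lborel) < \<infinity>" .
qed

text \<open>The supremum over a bounded family in (I) need not be measurable; the supremum over a
  sequence is, and (I) together with (M) makes it an integrable bound on \<open>[T, \<infinity>)\<close>.\<close>

lemma payoff_sequence_dominated:
  fixes q :: "nat \<Rightarrow> real^'n"
  assumes q: "\<And>m. q m \<in> D l" and c: "\<And>m. norm (q m) \<le> c"
  shows "\<exists>h. integrable lborel h \<and> (\<forall>m. AE s in lborel. T \<le> s \<longrightarrow> \<bar>f s l (q m)\<bar> \<le> h s)"
proof -
  define c' where "c' = max c 1"
  define B where "B s = (SUP m. ennreal \<bar>indicator {T..} s * f s l (q m)\<bar>)" for s
  have "(\<lambda>s. indicator {T..} s * f s l (q m)) \<in> borel_measurable borel" for m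
    using T_pos borel_measurable_continuous_on_indicator[of "{T..}" "\<lambda>s. f s l (q m)"]
      continuous_on_subset[OF continuous_on_payoff[OF q], of "{T..}"]
    by auto
  then have "(\<lambda>s. ennreal \<bar>indicator {T..} s * f s l (q m)\<bar>) \<in> borel_measurable borel" for m
    by measurable
  then have B_measurable: "B \<in> borel_measurable borel"
    unfolding B_def by (intro borel_measurable_SUP countableI_type)
  have B_le: "B s \<le> indicator {0..} s * payoff_sup c' s" for s
  proof (cases "T \<le> s")
    case True
    have "ennreal \<bar>f s l (q m)\<bar> \<le> payoff_sup c' s" for m
      using q c[of m] by (intro payoff_le_payoff_sup) (auto simp: c'_def)
    then show ?thesis using True T_pos by (auto simp: B_def intro!: SUP_least)
  qed (simp add: B_def)
  have "(\<integral>\<^sup>+ s. B s \<partial>lborel) \<le> (\<integral>\<^sup>+ s. indicator {0..} s * payoff_sup c' s \<partial>lborel)"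
    by (intro nn_integral_mono B_le)
  also have "\<dots> < \<infinity>"
    unfolding payoff_sup_def by (rule integrable_payoff_sup) (simp add: c'_def)
  finally have B_finite_integral: "(\<integral>\<^sup>+ s. B s \<partial>lborel) < \<infinity>" .
  then have B_finite: "AE s in lborel. B s \<noteq> \<infinity>"
    by (intro nn_integral_noteq_infinite) (use B_measurable in auto)
  show ?thesis
  proof (intro exI conjI allI)
    show "integrable lborel (\<lambda>s. enn2real (B s))"
      using B_measurable B_finite_integral by (intro integrable_enn2real) auto
    fix m
    show "AE s in lborel. T \<le> s \<longrightarrow> \<bar>f s l (q m)\<bar> \<le> enn2real (B s)"
      using B_finite
    proof eventually_elim
      case (elim s)
      show ?case
      proof
        assume "T \<le> s"
        then have "ennreal \<bar>f s l (q m)\<bar> \<le> B s"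
          unfolding B_def by (intro SUP_upper2[of m]) auto
        with elim show "\<bar>f s l (q m)\<bar> \<le> enn2real (B s)"
          using enn2real_mono[of "ennreal \<bar>f s l (q m)\<bar>" "B s"] by (simp add: less_top)
      qed
    qed
  qed
qed

lemma set_integrable_dominated_by_payoff:
  assumes A: "A \<in> sets borel" "A \<subseteq> {0..}" and \<phi>: "continuous_on A \<phi>"
    and q: "\<And>l. q l \<in> D l" and bound: "\<And>t. t \<in> A \<Longrightarrow> \<bar>\<phi> t\<bar> \<le> (\<Sum>l\<in>UNIV. \<bar>f t l (q l)\<bar>)"
  shows "set_integrable lborel A \<phi>"
  unfolding set_integrable_def
proof (rule Bochner_Integration.integrable_bound)
  show "integrable lborel (\<lambda>t. \<Sum>l\<in>UNIV. \<bar>indicator {0..} t * f t l (q l)\<bar>)"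
    using integrable_payoff[OF q] by (intro Bochner_Integration.integrable_sum integrable_abs)
  show "(\<lambda>t. indicat_real A t *\<^sub>R \<phi> t) \<in> borel_measurable lborel"
    using borel_measurable_continuous_on_indicator[OF A(1) \<phi>] by simp
  have "norm (indicat_real A t *\<^sub>R \<phi> t) \<le> norm (\<Sum>l\<in>UNIV. \<bar>indicator {0..} t * f t l (q l)\<bar>)" for t
    using bound[of t] A(2) by (cases "t \<in> A") (auto simp: sum_nonneg)
  then show "AE t in lborel. norm (indicat_real A t *\<^sub>R \<phi> t)
      \<le> norm (\<Sum>l\<in>UNIV. \<bar>indicator {0..} t * f t l (q l)\<bar>)"
    by simp
qed

definition payoff_rate :: "real^'n^'n \<Rightarrow> 'n \<Rightarrow> real \<Rightarrow> real" where
  "payoff_rate Q i t = (\<Sum>j\<in>UNIV. mexp t Q $ i $ j * f t j (Q $ j))"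

lemma Fval_eq_payoff_rate: "Fval f Q i = (LBINT t:{0..}. payoff_rate Q i t)"
  unfolding Fval_def payoff_rate_def ..

lemma payoff_rate_0: "payoff_rate Q i 0 = f 0 i (Q $ i)"
proof -
  have "payoff_rate Q i 0 = (\<Sum>j\<in>UNIV. if i = j then f 0 j (Q $ j) else 0)"
    unfolding payoff_rate_def mexp_0 by (rule sum.cong) (auto simp: mat_def)
  then show ?thesis by simp
qed

lemma continuous_on_payoff_rate: "Q \<in> admissible D \<Longrightarrow> continuous_on {0..} (payoff_rate Q i)"
  unfolding payoff_rate_def
  by (intro continuous_intros continuous_on_payoff admissible_row)

lemma set_integrable_payoff_rate:
  assumes Q: "Q \<in> admissible D"
  shows "set_integrable lborel {0..} (payoff_rate Q i)"
proof (rule set_integrable_dominated_by_payoff[OF _ _ continuous_on_payoff_rate[OF Q] admissible_row[OF Q]])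
  fix t :: real
  assume "t \<in> {0..}"
  then have "transition_matrix (mexp t Q)"
    by (intro transition_matrix_mexp admissible_generator Q) auto
  then show "\<bar>payoff_rate Q i t\<bar> \<le> (\<Sum>l\<in>UNIV. \<bar>f t l (Q $ l)\<bar>)"
    unfolding payoff_rate_def by (rule transition_matrix_abs_sum_le)
qed auto

lemma deviation_in_Aset:
  assumes Q: "Q \<in> admissible D" and d: "0 < d" and small: "d * (\<Sum>i\<in>UNIV. \<bar>Q $ i $ i\<bar>) \<le> 1"
  shows "mat 1 + d *\<^sub>R Q \<in> Aset D d"
  unfolding Aset_def
  using transition_matrix_mat_1_plus_generator[OF admissible_generator[OF Q] less_imp_le[OF d] small]
    genOf_mat_1_plus[of d Q] d Q
  by simp

end

section \<open>Convergence of the discrete continuation values\<close>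

locale convergent_discretization = regular_payoff f D T
  for f :: "real \<Rightarrow> 'n::finite \<Rightarrow> real^'n \<Rightarrow> real" and D T +
  fixes d :: "nat \<Rightarrow> real" and U :: "nat \<Rightarrow> real^'n^'n" and G :: "real^'n^'n"
  assumes G_admissible: "G \<in> admissible D"
    and d_pos: "\<And>m. 0 < d m" and d_tendsto: "d \<longlonglongrightarrow> 0"
    and U_Aset: "\<And>m. U m \<in> Aset D (d m)"
    and genOf_tendsto: "(\<lambda>m. genOf (d m) (U m)) \<longlonglongrightarrow> G"
begin

lemma genOf_row: "genOf (d m) (U m) $ l \<in> D l"
  using U_Aset[of m] unfolding Aset_def admissible_def by auto

lemma transition_matrix_U: "transition_matrix (U m)"
  using U_Aset[of m] unfolding Aset_def by auto

lemma step_bounds: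
  assumes "0 \<le> s"
  shows "real (nat \<lfloor>s / d m\<rfloor>) * d m \<le> s" "s < real (Suc (nat \<lfloor>s / d m\<rfloor>)) * d m"
  using nat_floor_divide_eq_iff[OF d_pos, of s m "nat \<lfloor>s / d m\<rfloor>"] assms by auto

lemma abs_step_payoff_rate_le:
  "\<bar>step_payoff_rate f (d m) (U m) j s\<bar>
    \<le> (\<Sum>l\<in>UNIV. \<bar>f (real (Suc (nat \<lfloor>s / d m\<rfloor>)) * d m) l (genOf (d m) (U m) $ l)\<bar>)"
  unfolding step_payoff_rate_def
  by (rule transition_matrix_abs_sum_le[OF transition_matrix_matpow[OF transition_matrix_U]])

lemma step_payoff_rate_tendsto:
  assumes s: "0 \<le> s"
  shows "(\<lambda>m. step_payoff_rate f (d m) (U m) j s) \<longlonglongrightarrow> payoff_rate G j s"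
proof -
  define k where "k m = nat \<lfloor>s / d m\<rfloor>" for m
  have k_lim: "(\<lambda>m. real (k m) * d m) \<longlonglongrightarrow> s"
  proof (rule tendsto_sandwich[of "\<lambda>m. s - d m" _ _ "\<lambda>m. s"])
    show "\<forall>\<^sub>F m in sequentially. s - d m \<le> real (k m) * d m"
      using step_bounds(2)[OF s] by (auto simp: k_def algebra_simps intro!: always_eventually less_imp_le)
    show "\<forall>\<^sub>F m in sequentially. real (k m) * d m \<le> s"
      using step_bounds(1)[OF s] by (auto simp: k_def intro!: always_eventually)
    show "(\<lambda>m. s - d m) \<longlonglongrightarrow> s"
      using tendsto_diff[OF tendsto_const d_tendsto, of s] by simp
  qed simp
  then have "(\<lambda>m. real (Suc (k m)) * d m) \<longlonglongrightarrow> s"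
    using tendsto_add[OF k_lim d_tendsto] by (simp add: algebra_simps)
  then have "(\<lambda>m. f (real (Suc (k m)) * d m) l (genOf (d m) (U m) $ l)) \<longlonglongrightarrow> f s l (G $ l)" for l
    using s d_pos genOf_row admissible_row[OF G_admissible]
    by (intro tendsto_payoff tendsto_vec_nth genOf_tendsto) (auto intro: less_imp_le)
  moreover have "(\<lambda>m. matpow (U m) (k m)) \<longlonglongrightarrow> mexp s G"
    using matpow_tendsto_mexp[OF admissible_generator[OF G_admissible] d_pos d_tendsto genOf_tendsto
        _ k_lim] transition_matrix_U
    by (simp add: mat_1_plus_genOf[OF less_imp_neq[OF d_pos, symmetric]])
  ultimately show ?thesis
    unfolding step_payoff_rate_def payoff_rate_def k_def[symmetric]
    by (intro tendsto_sum tendsto_mult tendsto_vec_nth)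
qed

lemma step_payoff_rate_bounded:
  obtains C where "\<And>m s. 0 \<le> s \<Longrightarrow> s < T \<Longrightarrow> \<bar>step_payoff_rate f (d m) (U m) j s\<bar> \<le> C"
proof -
  obtain dmax where dmax: "\<And>m. \<bar>d m\<bar> \<le> dmax"
    using convergent_imp_Bseq[OF convergentI[OF d_tendsto]] by (auto simp: Bseq_def)
  define K where "K l = {0..T + dmax} \<times> insert (G $ l) (range (\<lambda>m. genOf (d m) (U m) $ l))" for l
  have "compact (K l)" for l
    unfolding K_def
    by (intro compact_Times compact_Icc compact_sequence_with_limit tendsto_vec_nth genOf_tendsto)
  moreover have "K l \<subseteq> {0..} \<times> D l" for l
    unfolding K_def using genOf_row admissible_row[OF G_admissible] by auto
  ultimately have "\<exists>C. \<forall>t q. (t, q) \<in> K l \<longrightarrow> \<bar>f t l q\<bar> \<le> C" for l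
    by (metis payoff_bounded_on_compact)
  then obtain C where C: "\<And>l t q. (t, q) \<in> K l \<Longrightarrow> \<bar>f t l q\<bar> \<le> C l"
    by metis
  show ?thesis
  proof
    fix m s
    assume s: "0 \<le> s" "s < T"
    have "real (Suc (nat \<lfloor>s / d m\<rfloor>)) * d m \<le> T + dmax"
      using step_bounds(1)[OF s(1), of m] s(2) dmax[of m] abs_ge_self[of "d m"]
      by (simp add: algebra_simps)
    then have "(real (Suc (nat \<lfloor>s / d m\<rfloor>)) * d m, genOf (d m) (U m) $ l) \<in> K l" for l
      unfolding K_def using d_pos[of m] by auto
    then show "\<bar>step_payoff_rate f (d m) (U m) j s\<bar> \<le> (\<Sum>l\<in>UNIV. C l)"
      using abs_step_payoff_rate_le[of m j s] C by (meson order_trans sum_mono)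
  qed
qed

lemma abs_step_payoff_rate_le_tail:
  assumes "T \<le> s"
  shows "\<bar>step_payoff_rate f (d m) (U m) j s\<bar> \<le> (\<Sum>l\<in>UNIV. \<bar>f s l (genOf (d m) (U m) $ l)\<bar>)"
proof -
  have "s \<le> real (Suc (nat \<lfloor>s / d m\<rfloor>)) * d m"
    using step_bounds(2)[of s m] assms T_pos by simp
  then have "\<bar>f (real (Suc (nat \<lfloor>s / d m\<rfloor>)) * d m) l (genOf (d m) (U m) $ l)\<bar>
      \<le> \<bar>f s l (genOf (d m) (U m) $ l)\<bar>" for l
    by (rule payoff_decreasing[OF genOf_row assms])
  then have "(\<Sum>l\<in>UNIV. \<bar>f (real (Suc (nat \<lfloor>s / d m\<rfloor>)) * d m) l (genOf (d m) (U m) $ l)\<bar>)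
      \<le> (\<Sum>l\<in>UNIV. \<bar>f s l (genOf (d m) (U m) $ l)\<bar>)"
    by (rule sum_mono)
  with abs_step_payoff_rate_le[of m j s] show ?thesis
    by linarith
qed

lemma step_payoff_rate_dominated:
  obtains h where "integrable lborel h"
    "\<And>m. AE s in lborel. T \<le> s \<longrightarrow> \<bar>step_payoff_rate f (d m) (U m) j s\<bar> \<le> h s"
proof -
  obtain c where c: "\<And>m. norm (genOf (d m) (U m)) \<le> c"
    using convergent_imp_Bseq[OF convergentI[OF genOf_tendsto]] by (auto simp: Bseq_def)
  have "\<forall>l. \<exists>h. integrable lborel h \<and>
      (\<forall>m. AE s in lborel. T \<le> s \<longrightarrow> \<bar>f s l (genOf (d m) (U m) $ l)\<bar> \<le> h s)"
    by (intro allI payoff_sequence_dominated[where c=c] genOf_row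
        order_trans[OF Finite_Cartesian_Product.norm_nth_le c])
  then obtain h where h: "\<And>l. integrable lborel (h l)"
    "\<And>l m. AE s in lborel. T \<le> s \<longrightarrow> \<bar>f s l (genOf (d m) (U m) $ l)\<bar> \<le> h l s"
    by (auto dest!: choice)
  show ?thesis
  proof
    show "integrable lborel (\<lambda>s. \<Sum>l\<in>UNIV. h l s)"
      using h(1) by (rule Bochner_Integration.integrable_sum)
    fix m
    have "AE s in lborel. \<forall>l\<in>UNIV. T \<le> s \<longrightarrow> \<bar>f s l (genOf (d m) (U m) $ l)\<bar> \<le> h l s"
      using h(2) by (subst AE_finite_all) auto
    then show "AE s in lborel. T \<le> s \<longrightarrow> \<bar>step_payoff_rate f (d m) (U m) j s\<bar> \<le> (\<Sum>l\<in>UNIV. h l s)"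
    proof eventually_elim
      case (elim s)
      show ?case
      proof
        assume "T \<le> s"
        with elim have "(\<Sum>l\<in>UNIV. \<bar>f s l (genOf (d m) (U m) $ l)\<bar>) \<le> (\<Sum>l\<in>UNIV. h l s)"
          by (intro sum_mono) blast
        with abs_step_payoff_rate_le_tail[OF \<open>T \<le> s\<close>, of m j]
        show "\<bar>step_payoff_rate f (d m) (U m) j s\<bar> \<le> (\<Sum>l\<in>UNIV. h l s)"
          by linarith
      qed
    qed
  qed
qed

lemma step_payoff_rate_measurable:
  "(\<lambda>s. indicator {0..} s * step_payoff_rate f (d m) (U m) j s) \<in> borel_measurable borel"
proof -
  define b where "b k = (\<Sum>l\<in>UNIV. matpow (U m) k $ j $ l *
      f (real (Suc k) * d m) l (genOf (d m) (U m) $ l))" for k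
  have "(\<lambda>s. b (nat \<lfloor>s / d m\<rfloor>)) \<in> borel_measurable borel"
    by measurable
  then show ?thesis
    by (simp add: step_payoff_rate_def b_def)
qed

text \<open>The vector of discrete values collected from time \<open>1\<close> on, indexed by the state at
  time \<open>1\<close>.\<close>

definition continuation_value :: "nat \<Rightarrow> real^'n" where
  "continuation_value m = (\<chi> j. LBINT s:{0..}. step_payoff_rate f (d m) (U m) j s)"

lemma
  shows set_integrable_step_payoff_rate:
      "set_integrable lborel {0..} (step_payoff_rate f (d m) (U m) j)"
    and integral_step_payoff_rate_tendsto:
      "(\<lambda>m. LBINT s:{0..}. step_payoff_rate f (d m) (U m) j s) \<longlonglongrightarrow> Fval f G j"
proof -
  obtain C where C: "\<And>m s. 0 \<le> s \<Longrightarrow> s < T \<Longrightarrow> \<bar>step_payoff_rate f (d m) (U m) j s\<bar> \<le> C"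
    using step_payoff_rate_bounded[where j=j] by blast
  obtain h where h: "integrable lborel h"
    "\<And>m. AE s in lborel. T \<le> s \<longrightarrow> \<bar>step_payoff_rate f (d m) (U m) j s\<bar> \<le> h s"
    using step_payoff_rate_dominated[where j=j] by blast
  note limit = dominated_convergence_halfline[OF step_payoff_rate_measurable step_payoff_rate_tendsto C h]
  show "set_integrable lborel {0..} (step_payoff_rate f (d m) (U m) j)"
    by (rule limit(2))
  show "(\<lambda>m. LBINT s:{0..}. step_payoff_rate f (d m) (U m) j s) \<longlonglongrightarrow> Fval f G j"
    unfolding Fval_eq_payoff_rate by (rule limit(3))
qed

lemma continuation_value_tendsto: "continuation_value \<longlonglongrightarrow> (\<chi> j. Fval f G j)"
  unfolding continuation_value_def by (intro vec_tendstoI) (simp add: integral_step_payoff_rate_tendsto)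

lemma sums_continuation_value:
  "(\<lambda>k. \<Sum>l\<in>UNIV. matpow (U m) k $ j $ l * kappa f (d m) (Suc k) l (U m $ l)) sums continuation_value m $ j"
  unfolding continuation_value_def
  using sums_step_payoff_rate[OF d_pos set_integrable_step_payoff_rate] by simp

lemma discrete_inequality_eventually:
  assumes eq: "\<And>m. disc_equilibrium f D (d m) (U m)" and Q: "Q \<in> admissible D"
  shows "\<forall>\<^sub>F m in sequentially. f 0 i (Q $ i) + Q $ i \<bullet> continuation_value m
      \<le> f 0 i (genOf (d m) (U m) $ i) + genOf (d m) (U m) $ i \<bullet> continuation_value m"
proof -
  have "(\<lambda>m. d m * (\<Sum>i\<in>UNIV. \<bar>Q $ i $ i\<bar>)) \<longlonglongrightarrow> 0"
    using tendsto_mult[OF d_tendsto tendsto_const] by simp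
  then have "\<forall>\<^sub>F m in sequentially. d m * (\<Sum>i\<in>UNIV. \<bar>Q $ i $ i\<bar>) < 1"
    by (rule order_tendstoD(2)) simp
  then show ?thesis
  proof eventually_elim
    case (elim m)
    have "mat 1 + d m *\<^sub>R Q \<in> Aset D (d m)"
      using elim by (intro deviation_in_Aset[OF Q d_pos]) simp
    with eq[of m] have "Vcat f (d m) (mat 1 + d m *\<^sub>R Q) (U m) i \<le> Vdisc f (d m) (U m) i"
      by (simp add: disc_equilibrium_def)
    from discrete_equilibrium_inequality[OF d_pos this sums_continuation_value] show ?case
      by (simp add: genOf_mat_1_plus[OF less_imp_neq[OF d_pos, symmetric]])
  qed
qed

end

section \<open>Passing to the limit\<close>

context regular_payoff
begin

lemma limit_of_discrete_equilibria:
  fixes \<delta> :: "nat \<Rightarrow> real" and u :: "nat \<Rightarrow> real^'n^'n" and r :: "nat \<Rightarrow> nat"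
  assumes \<delta>_pos: "\<And>n. 0 < \<delta> n" and \<delta>_lim: "\<delta> \<longlonglongrightarrow> 0"
    and eq: "\<And>n. disc_equilibrium f D (\<delta> n) (u n)"
    and Qs: "Qs \<in> admissible D" and r: "strict_mono r"
    and conv: "(\<lambda>m. genOf (\<delta> (r m)) (u (r m))) \<longlonglongrightarrow> Qs"
    and Q: "Q \<in> admissible D"
  shows "f 0 i (Q $ i) + Q $ i \<bullet> (\<chi> j. Fval f Qs j) \<le> f 0 i (Qs $ i) + Qs $ i \<bullet> (\<chi> j. Fval f Qs j)"
proof -
  define d where "d m = \<delta> (r m)" for m
  define U where "U m = u (r m)" for m
  have eq': "disc_equilibrium f D (d m) (U m)" for m
    unfolding d_def U_def by (rule eq)
  interpret convergent_discretization f D T d U Qs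
  proof
    show "d \<longlonglongrightarrow> 0"
      using LIMSEQ_subseq_LIMSEQ[OF \<delta>_lim r] by (simp add: d_def[abs_def] o_def)
    show "U m \<in> Aset D (d m)" for m
      using eq'[of m] by (simp add: disc_equilibrium_def)
  qed (use \<delta>_pos Qs conv in \<open>simp_all add: d_def U_def\<close>)
  have "(\<lambda>m. f 0 i (genOf (d m) (U m) $ i)) \<longlonglongrightarrow> f 0 i (Qs $ i)"
    by (intro tendsto_payoff tendsto_const tendsto_vec_nth genOf_tendsto genOf_row
        admissible_row[OF Qs] order_refl)
  then have "(\<lambda>m. f 0 i (genOf (d m) (U m) $ i) + genOf (d m) (U m) $ i \<bullet> continuation_value m)
      \<longlonglongrightarrow> f 0 i (Qs $ i) + Qs $ i \<bullet> (\<chi> j. Fval f Qs j)"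
    by (intro tendsto_add tendsto_inner tendsto_vec_nth genOf_tendsto continuation_value_tendsto)
  moreover have "(\<lambda>m. f 0 i (Q $ i) + Q $ i \<bullet> continuation_value m)
      \<longlonglongrightarrow> f 0 i (Q $ i) + Q $ i \<bullet> (\<chi> j. Fval f Qs j)"
    by (intro tendsto_add tendsto_inner tendsto_const continuation_value_tendsto)
  ultimately show ?thesis
    using discrete_inequality_eventually[OF eq' Q, of i] by (rule tendsto_le[OF trivial_limit_sequentially])
qed

text \<open>\<open>shifted_value G e j\<close> is \<open>F(j, G)\<close> for the payoff \<open>f(e + \<cdot>)\<close>: the value at time \<open>e\<close>
  of following \<open>G\<close> from state \<open>j\<close>.\<close>

definition shifted_payoff_rate :: "real^'n^'n \<Rightarrow> real \<Rightarrow> 'n \<Rightarrow> real \<Rightarrow> real" where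
  "shifted_payoff_rate G e j s = (\<Sum>l\<in>UNIV. mexp s G $ j $ l * f (e + s) l (G $ l))"

definition shifted_value :: "real^'n^'n \<Rightarrow> real \<Rightarrow> 'n \<Rightarrow> real" where
  "shifted_value G e j = (LBINT s:{0..}. shifted_payoff_rate G e j s)"

lemma continuous_on_shifted_payoff_rate:
  assumes G: "G \<in> admissible D" and e: "0 \<le> e"
  shows "continuous_on {0..} (shifted_payoff_rate G e j)"
  unfolding shifted_payoff_rate_def using e
  by (intro continuous_intros continuous_on_compose2[OF continuous_on_payoff[OF admissible_row[OF G]],
        of _ "\<lambda>s. e + s"]) auto

lemma abs_shifted_payoff_rate_le:
  assumes G: "G \<in> admissible D" and s: "0 \<le> s"
  shows "\<bar>shifted_payoff_rate G e j s\<bar> \<le> (\<Sum>l\<in>UNIV. \<bar>f (e + s) l (G $ l)\<bar>)"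
  unfolding shifted_payoff_rate_def
  by (rule transition_matrix_abs_sum_le[OF transition_matrix_mexp[OF admissible_generator[OF G] s]])

lemma set_integral_after_switch:
  assumes G: "G \<in> admissible D" and e: "0 < e"
  defines "h j t \<equiv> \<Sum>l\<in>UNIV. mexp (t - e) G $ j $ l * f t l (G $ l)"
  shows "set_integrable lborel {e<..} (\<lambda>t. \<Sum>j\<in>UNIV. c j * h j t)"
    and "(LBINT t:{e<..}. \<Sum>j\<in>UNIV. c j * h j t) = (\<Sum>j\<in>UNIV. c j * shifted_value G e j)"
proof -
  have G_row: "G $ l \<in> D l" for l
    by (rule admissible_row[OF G])
  have h_int: "set_integrable lborel {e<..} (h j)" for j
  proof (rule set_integrable_dominated_by_payoff[OF _ _ _ G_row])
    show "continuous_on {e<..} (h j)"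
      unfolding h_def using e
      by (intro continuous_intros
          continuous_on_subset[OF continuous_on_payoff[OF G_row]]) auto
    fix t :: real
    assume "t \<in> {e<..}"
    then have "transition_matrix (mexp (t - e) G)"
      by (intro transition_matrix_mexp admissible_generator G) auto
    then show "\<bar>h j t\<bar> \<le> (\<Sum>l\<in>UNIV. \<bar>f t l (G $ l)\<bar>)"
      unfolding h_def by (rule transition_matrix_abs_sum_le)
  qed (use e in auto)
  then show "set_integrable lborel {e<..} (\<lambda>t. \<Sum>j\<in>UNIV. c j * h j t)"
    by (intro set_integral_sum(1)) auto
  have "(LBINT t:{e<..}. h j t) = shifted_value G e j" for j
    using set_integral_shift_halfline[OF continuous_on_shifted_payoff_rate[OF G], of e e j] e
    by (simp add: h_def shifted_value_def shifted_payoff_rate_def)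
  with h_int show "(LBINT t:{e<..}. \<Sum>j\<in>UNIV. c j * h j t) = (\<Sum>j\<in>UNIV. c j * shifted_value G e j)"
    by (subst set_integral_sum(2)) auto
qed

lemma Fval_split:
  assumes G: "G \<in> admissible D" and e: "0 < e"
  shows "Fval f G i = (LBINT t:{0..e}. payoff_rate G i t) + (\<Sum>j\<in>UNIV. mexp e G $ i $ j * shifted_value G e j)"
proof -
  have semigroup: "payoff_rate G i t
      = (\<Sum>j\<in>UNIV. mexp e G $ i $ j * (\<Sum>l\<in>UNIV. mexp (t - e) G $ j $ l * f t l (G $ l)))" for t
  proof -
    have "mexp t G = mexp e G ** mexp (t - e) G"
      using mexp_add[of e "t - e" G] by simp
    then have "payoff_rate G i t
        = (\<Sum>l\<in>UNIV. (\<Sum>j\<in>UNIV. mexp e G $ i $ j * mexp (t - e) G $ j $ l) * f t l (G $ l))"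
      unfolding payoff_rate_def by (simp add: matrix_matrix_mult_def)
    then show ?thesis
      by (simp add: sum_distrib_left sum_distrib_right mult.assoc) (rule sum.swap)
  qed
  have "Fval f G i = (LBINT t:{0..e}. payoff_rate G i t) + (LBINT t:{e<..}. payoff_rate G i t)"
    unfolding Fval_eq_payoff_rate using e
    by (intro set_integral_split_at set_integrable_subset[OF set_integrable_payoff_rate[OF G]]) auto
  then show ?thesis
    unfolding semigroup set_integral_after_switch(2)[OF G e] by simp
qed

lemma Fcat_split:
  assumes G: "G \<in> admissible D" and Q: "Q \<in> admissible D" and e: "0 < e"
  shows "Fcat f Q e G i = (LBINT t:{0..e}. payoff_rate Q i t) + (\<Sum>j\<in>UNIV. mexp e Q $ i $ j * shifted_value G e j)"
proof -
  define c where "c t = (if t \<le> e then payoff_rate Q i t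
      else (\<Sum>j\<in>UNIV. mexp e Q $ i $ j * (\<Sum>l\<in>UNIV. mexp (t - e) G $ j $ l * f t l (G $ l))))" for t
  have "c = (\<lambda>t. if t \<le> e then (\<Sum>j\<in>UNIV. mexp t Q $ i $ j * f t j (Q $ j))
      else (\<Sum>j\<in>UNIV. \<Sum>l\<in>UNIV. mexp e Q $ i $ j * mexp (t - e) G $ j $ l * f t l (G $ l)))"
    by (simp add: fun_eq_iff c_def payoff_rate_def sum_distrib_left mult.assoc)
  then have "Fcat f Q e G i = (LBINT t:{0..}. c t)"
    unfolding Fcat_def by simp
  also have "\<dots> = (LBINT t:{0..e}. c t) + (LBINT t:{e<..}. c t)"
  proof (rule set_integral_split_at)
    have "set_integrable lborel {0..e} (payoff_rate Q i)"
      by (rule set_integrable_subset[OF set_integrable_payoff_rate[OF Q]]) auto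
    then show "set_integrable lborel {0..e} c"
      by (rule set_integrable_cong[THEN iffD1, rotated 3]) (auto simp: c_def)
    show "set_integrable lborel {e<..} c"
      using set_integral_after_switch(1)[OF G e]
      by (rule set_integrable_cong[THEN iffD1, rotated 3]) (auto simp: c_def)
  qed (use e in simp)
  also have "(LBINT t:{0..e}. c t) = (LBINT t:{0..e}. payoff_rate Q i t)"
    by (rule set_lebesgue_integral_cong) (auto simp: c_def)
  also have "(LBINT t:{e<..}. c t) = (\<Sum>j\<in>UNIV. mexp e Q $ i $ j * shifted_value G e j)"
    unfolding set_integral_after_switch(2)[OF G e, symmetric]
    by (rule set_lebesgue_integral_cong) (auto simp: c_def)
  finally show ?thesis .
qed

lemma shifted_payoff_rate_bounded:
  assumes G: "G \<in> admissible D"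
  obtains C where "\<And>e s. 0 \<le> e \<Longrightarrow> e \<le> E \<Longrightarrow> 0 \<le> s \<Longrightarrow> s < T \<Longrightarrow> \<bar>shifted_payoff_rate G e j s\<bar> \<le> C"
proof -
  obtain C where C: "\<And>l t. t \<in> {0..T + E} \<Longrightarrow> \<bar>f t l (G $ l)\<bar> \<le> C l"
    using payoff_bounded_on_interval[OF admissible_row[OF G]] by metis
  show ?thesis
  proof (rule that)
    fix e s
    assume "0 \<le> e" "e \<le> E" "0 \<le> s" "s < T"
    then have "(\<Sum>l\<in>UNIV. \<bar>f (e + s) l (G $ l)\<bar>) \<le> (\<Sum>l\<in>UNIV. C l)"
      by (intro sum_mono C) auto
    with abs_shifted_payoff_rate_le[OF G \<open>0 \<le> s\<close>, of e j]
    show "\<bar>shifted_payoff_rate G e j s\<bar> \<le> (\<Sum>l\<in>UNIV. C l)"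
      by linarith
  qed
qed

lemma shifted_payoff_rate_dominated:
  assumes G: "G \<in> admissible D" and e: "0 \<le> e" and s: "T \<le> s"
  shows "\<bar>shifted_payoff_rate G e j s\<bar> \<le> (\<Sum>l\<in>UNIV. \<bar>indicator {0..} s * f s l (G $ l)\<bar>)"
proof -
  have "(\<Sum>l\<in>UNIV. \<bar>f (e + s) l (G $ l)\<bar>) \<le> (\<Sum>l\<in>UNIV. \<bar>indicator {0..} s * f s l (G $ l)\<bar>)"
    using e s T_pos by (intro sum_mono) (simp add: payoff_decreasing[OF admissible_row[OF G]])
  with abs_shifted_payoff_rate_le[OF G, of s e j] s T_pos show ?thesis
    by linarith
qed

lemma shifted_value_tendsto:
  assumes G: "G \<in> admissible D"
  shows "((\<lambda>e. shifted_value G e j) \<longlongrightarrow> Fval f G j) (at_right 0)"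
  unfolding tendsto_at_iff_sequentially o_def
proof (intro allI impI)
  fix X :: "nat \<Rightarrow> real"
  assume "\<forall>n. X n \<in> {0<..} - {0}" and X_lim: "X \<longlonglongrightarrow> 0"
  then have X_pos: "0 < X n" for n
    by auto
  obtain E where E: "\<And>n. \<bar>X n\<bar> \<le> E"
    using convergent_imp_Bseq[OF convergentI[OF X_lim]] by (auto simp: Bseq_def)
  obtain C where C: "\<And>e s. 0 \<le> e \<Longrightarrow> e \<le> E \<Longrightarrow> 0 \<le> s \<Longrightarrow> s < T \<Longrightarrow> \<bar>shifted_payoff_rate G e j s\<bar> \<le> C"
    using shifted_payoff_rate_bounded[OF G] by metis
  have "(\<lambda>s. indicator {0..} s * shifted_payoff_rate G (X n) j s) \<in> borel_measurable borel" for n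
    using borel_measurable_continuous_on_indicator[OF _ continuous_on_shifted_payoff_rate[OF G]] X_pos[of n]
    by simp
  moreover have "(\<lambda>n. shifted_payoff_rate G (X n) j s) \<longlonglongrightarrow> payoff_rate G j s" if "0 \<le> s" for s
    unfolding shifted_payoff_rate_def payoff_rate_def
    using tendsto_add[OF X_lim tendsto_const, of s] X_pos that admissible_row[OF G]
    by (intro tendsto_sum tendsto_mult tendsto_const tendsto_payoff) (auto intro: add_nonneg_nonneg less_imp_le)
  moreover have "\<bar>shifted_payoff_rate G (X n) j s\<bar> \<le> C" if "0 \<le> s" "s < T" for n s
    using C X_pos[of n] E[of n] that by (simp add: less_imp_le)
  moreover have "integrable lborel (\<lambda>s. \<Sum>l\<in>UNIV. \<bar>indicator {0..} s * f s l (G $ l)\<bar>)"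
    using integrable_payoff[OF admissible_row[OF G]]
    by (intro Bochner_Integration.integrable_sum integrable_abs)
  moreover have "AE s in lborel. T \<le> s \<longrightarrow>
      \<bar>shifted_payoff_rate G (X n) j s\<bar> \<le> (\<Sum>l\<in>UNIV. \<bar>indicator {0..} s * f s l (G $ l)\<bar>)" for n
    using shifted_payoff_rate_dominated[OF G less_imp_le[OF X_pos[of n]]] by simp
  ultimately show "(\<lambda>n. shifted_value G (X n) j) \<longlonglongrightarrow> Fval f G j"
    unfolding shifted_value_def Fval_eq_payoff_rate by (rule dominated_convergence_halfline(3))
qed

text \<open>For small \<open>e\<close>, \<open>(F(i, G) - F(i, Q \<otimes>\<^sub>e G)) / e\<close> is the average over \<open>[0, e]\<close> of the payoff
  rate difference plus \<open>((e\<^bsup>eG\<^esup> - e\<^bsup>eQ\<^esup>) / e) \<cdot> shifted_value G e\<close>; these converge to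
  \<open>f(0, i, G\<^sub>i) - f(0, i, Q\<^sub>i)\<close> and \<open>(G\<^sub>i - Q\<^sub>i) \<cdot> F(G)\<close>.\<close>

lemma weak_equilibrium_condition:
  assumes G: "G \<in> admissible D" and Q: "Q \<in> admissible D"
    and ineq: "f 0 i (Q $ i) + Q $ i \<bullet> (\<chi> j. Fval f G j) \<le> f 0 i (G $ i) + G $ i \<bullet> (\<chi> j. Fval f G j)"
  shows "0 \<le> Liminf (at_right 0) (\<lambda>e. ereal ((Fval f G i - Fcat f Q e G i) / e))"
proof -
  define L where "L = f 0 i (G $ i) - f 0 i (Q $ i) + (\<Sum>j\<in>UNIV. (G $ i $ j - Q $ i $ j) * Fval f G j)"
  have "0 \<le> L"
    using ineq by (simp add: L_def inner_vec_def algebra_simps sum_subtractf)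
  define R where "R e = (LBINT t:{0..e}. payoff_rate G i t) / e - (LBINT t:{0..e}. payoff_rate Q i t) / e
     + (\<Sum>j\<in>UNIV. ((mexp e G $ i $ j - mat 1 $ i $ j) / e - (mexp e Q $ i $ j - mat 1 $ i $ j) / e)
         * shifted_value G e j)" for e
  have "(R \<longlongrightarrow> payoff_rate G i 0 - payoff_rate Q i 0 + (\<Sum>j\<in>UNIV. (G $ i $ j - Q $ i $ j) * Fval f G j))
      (at_right 0)"
    unfolding R_def
    by (intro tendsto_add tendsto_diff tendsto_sum tendsto_mult average_tendsto_at_right
        continuous_on_payoff_rate G Q mexp_difference_quotient shifted_value_tendsto)
  then have "(R \<longlongrightarrow> L) (at_right 0)"
    by (simp add: L_def payoff_rate_0)
  moreover have "\<forall>\<^sub>F e in at_right 0. R e = (Fval f G i - Fcat f Q e G i) / e"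
    using eventually_at_right_less
  proof eventually_elim
    case (elim e)
    then show ?case
      unfolding Fval_split[OF G elim] Fcat_split[OF G Q elim] R_def
      by (simp add: diff_divide_distrib add_divide_distrib sum_divide_distrib algebra_simps sum_subtractf)
  qed
  ultimately have "((\<lambda>e. ereal ((Fval f G i - Fcat f Q e G i) / e)) \<longlongrightarrow> ereal L) (at_right 0)"
    by (simp add: lim_ereal Lim_transform_eventually)
  then have "Liminf (at_right 0) (\<lambda>e. ereal ((Fval f G i - Fcat f Q e G i) / e)) = ereal L"
    by (intro lim_imp_Liminf) simp_all
  with \<open>0 \<le> L\<close> show ?thesis
    by simp
qed

end

theorem mainTheorem11:
  fixes f :: "real \<Rightarrow> 'n::finite \<Rightarrow> real^'n \<Rightarrow> real"
    and D :: "'n \<Rightarrow> (real^'n) set"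
    and \<delta> :: "nat \<Rightarrow> real"
    and u :: "nat \<Rightarrow> real^'n^'n"
    and Qs :: "real^'n^'n"
  assumes D_sub: "\<And>i. D i \<subseteq> Eset i"
    and I: "\<And>c. c > 0 \<Longrightarrow>
      (\<integral>\<^sup>+ t. indicator {0..} t *
         (SUP i. SUP q\<in>{q\<in>D i. norm q \<le> c}. ennreal \<bar>f t i q\<bar>) \<partial>lborel) < \<infinity>"
    and M: "\<exists>T>0. \<forall>i. \<forall>q\<in>D i. \<forall>s t. T \<le> s \<longrightarrow> s \<le> t \<longrightarrow> \<bar>f t i q\<bar> \<le> \<bar>f s i q\<bar>"
    and cont: "\<And>i. continuous_on ({0..} \<times> D i) (\<lambda>(t, q). f t i q)"
    and \<delta>_pos: "\<And>n. \<delta> n > 0"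
    and \<delta>_dec: "decseq \<delta>"
    and \<delta>_lim: "\<delta> \<longlonglongrightarrow> 0"
    and eq: "\<And>n. disc_equilibrium f D (\<delta> n) (u n)"
    and Qs_adm: "Qs \<in> admissible D"
    and conv: "\<exists>r. strict_mono r \<and> (\<lambda>m. genOf (\<delta> (r m)) (u (r m))) \<longlonglongrightarrow> Qs"
  shows "(\<forall>i. \<forall>Q\<in>admissible D.
            f 0 i (Qs $ i) + Qs $ i \<bullet> (\<chi> j. Fval f Qs j)
              \<ge> f 0 i (Q $ i) + Q $ i \<bullet> (\<chi> j. Fval f Qs j))
         \<and> weak_equilibrium f D Qs"
proof -
  obtain T where "T > 0" and "\<forall>i. \<forall>q\<in>D i. \<forall>s t. T \<le> s \<longrightarrow> s \<le> t \<longrightarrow> \<bar>f t i q\<bar> \<le> \<bar>f s i q\<bar>"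
    using M by blast
  then interpret regular_payoff f D T
    using D_sub I cont by unfold_locales auto
  obtain r where "strict_mono r" "(\<lambda>m. genOf (\<delta> (r m)) (u (r m))) \<longlonglongrightarrow> Qs"
    using conv by blast
  then have limit_ineq: "\<forall>i. \<forall>Q\<in>admissible D.
      f 0 i (Q $ i) + Q $ i \<bullet> (\<chi> j. Fval f Qs j) \<le> f 0 i (Qs $ i) + Qs $ i \<bullet> (\<chi> j. Fval f Qs j)"
    using limit_of_discrete_equilibria[OF \<delta>_pos \<delta>_lim eq Qs_adm] by blast
  moreover have "weak_equilibrium f D Qs"
    unfolding weak_equilibrium_def
    using Qs_adm limit_ineq weak_equilibrium_condition[OF Qs_adm] by blast
  ultimately show ?thesis
    by blast
qed

end
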